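(* Let $f:D\subset\mathbb{R}\times\mathbb{R}^3\to\mathbb{R}^3$ be a $C^3$ velocity field with $\operatorname{tr}\nabla f(t,x)\equiv 0$ (incompressible), let $t_0\in\mathbb{R}$, $T>0$, and let $x\in X(t_0)$ be a point whose solution exists on $[t_0,t_0+T]$. Let $N=\nabla\tilde f_T(x)$ be the mesochronic Jacobian, with characteristic polynomial $\lambda^3-t_{\tilde f}\lambda^2+m_{\tilde f}\lambda-d_{\tilde f}$, i.e. $t_{\tilde f}=\operatorname{tr}N$, $m_{\tilde f}=\operatorname{tr}\operatorname{cof}N$ (sum of the three principal $2\times2$ minors), $d_{\tilde f}=\det N$. Define $$\Sigma=\frac{d_{\tilde f}T^3}{8-2m_{\tilde f}T^2-3d_{\tilde f}T^3},$$ $$\Delta=-4d_{\tilde f}^4T^{12}-12d_{\tilde f}^3m_{\tilde f}T^{11}-13d_{\tilde f}^2m_{\tilde f}^2T^{10}-6d_{\tilde f}m_{\tilde f}^3T^9+(18d_{\tilde f}^2m_{\tilde f}-m_{\tilde f}^4)T^8+18d_{\tilde f}m_{\tilde f}^2T^7+(27d_{\tilde f}^2+4m_{\tilde f}^3)T^6.$$ Let $\mu_1,\mu_2,\mu_3$ be the eigenvalues (with multiplicity) of $\nabla\psi_T(x)$. Then: (i) If $8-2m_{\tilde f}T^2-3d_{\tilde f}T^3=0$, then $-1$ is an eigenvalue of $\nabla\psi_T(x)$, all three eigenvalues are real, and $x$ is non-mesohyperbolic. (ii) If $8-2m_{\tilde f}T^2-3d_{\tilde f}T^3\neq0$ (so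 $\Sigma$ is finite): if $\Sigma>0$, exactly two eigenvalues (counted with multiplicity) lie strictly inside the unit circle and one strictly outside; if $\Sigma<0$, exactly one lies strictly inside and two strictly outside; if $\Sigma=0$, then $1$ is an eigenvalue. (iii) If $\Delta<0$ the eigenvalues are real and distinct; if $\Delta>0$ there is one real eigenvalue and a pair of non-real complex-conjugate eigenvalues; if $\Delta=0$ all eigenvalues are real and (at least) two coincide. (iv) $x$ is mesohyperbolic on $[t_0,t_0+T]$ if and only if $d_{\tilde f}\neq0$ and $8-2m_{\tilde f}T^2-3d_{\tilde f}T^3\neq0$.
   Context: $\phi(t,t_0,x_0)$ denotes the solution of $\dot x=f(t,x)$ with $x(t_0)=x_0$. $X(t_0)\subset\mathbb{R}^3$ is an open set of initial values whose solutions exist on $[t_0,t_0+T]$. The time-$T$ map is $\psi_T(x)=\phi(t_0+T,t_0,x)$; by incompressibility $\det\nabla\psi_T\equiv1$. The mesochronic velocity is $\tilde f_T(x)=\frac1T\int_{t_0}^{t_0+T}f(\tau,\phi(\tau,t_0,x))\,d\tau$, so that $\psi_T(x)=x+T\tilde f_T(x)$ and $\nabla\psi_T(x)=\mathrm{Id}+T\nabla\tilde f_T(x)$; its Jacobian $\nabla\tilde f_T$ is the mesochronic Jacobian. A point $x$ is mesohyperbolic on $[t_0,t_0+T]$ if no eigenvalue of $\nabla\psi_T(x)$ has modulus $1$; otherwise it is non-mesohyperbolic. *)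

theory Defs
  imports "HOL-Analysis.Analysis" "HOL-Computational_Algebra.Polynomial"
begin

definition C1_on :: "('a::real_normed_vector \<Rightarrow> 'b::real_normed_vector) \<Rightarrow> 'a set \<Rightarrow> bool" where
  "C1_on f S \<longleftrightarrow> (\<exists>f'. (\<forall>x\<in>S. (f has_derivative blinfun_apply (f' x)) (at x)) \<and> continuous_on S f')"

definition C2_on :: "('a::real_normed_vector \<Rightarrow> 'b::real_normed_vector) \<Rightarrow> 'a set \<Rightarrow> bool" where
  "C2_on f S \<longleftrightarrow> (\<exists>f'. (\<forall>x\<in>S. (f has_derivative blinfun_apply (f' x)) (at x)) \<and> C1_on f' S)"

definition C3_on :: "('a::real_normed_vector \<Rightarrow> 'b::real_normed_vector) \<Rightarrow> 'a set \<Rightarrow> bool" where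
  "C3_on f S \<longleftrightarrow> (\<exists>f'. (\<forall>x\<in>S. (f has_derivative blinfun_apply (f' x)) (at x)) \<and> C2_on f' S)"

definition charpoly :: "real^3^3 \<Rightarrow> complex poly" where
  "charpoly A = det (\<chi> i j. (if i = j then [:0, 1:] else 0) - [: complex_of_real (A $ i $ j) :])"

definition cplx_eigenvalue :: "real^3^3 \<Rightarrow> complex \<Rightarrow> bool" where
  "cplx_eigenvalue A z \<longleftrightarrow> poly (charpoly A) z = 0"

definition mesohyperbolic :: "(real^3 \<Rightarrow> real^3) \<Rightarrow> real^3 \<Rightarrow> bool" where
  "mesohyperbolic psi x \<longleftrightarrow> (\<forall>z. cplx_eigenvalue (jacobian psi (at x)) z \<longrightarrow> cmod z \<noteq> 1)"

definition minor_sum :: "real^3^3 \<Rightarrow> real" where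
  "minor_sum N = N$1$1 * N$2$2 - N$1$2 * N$2$1 + N$1$1 * N$3$3 - N$1$3 * N$3$1
                + N$2$2 * N$3$3 - N$2$3 * N$3$2"

end

theory Submission
  imports Defs
begin

text \<open>
  Since \<open>\<nabla>\<psi>\<^sub>T(x) = I + T N\<close>, its characteristic polynomial is
  \<open>\<lambda>\<^sup>3 - a \<lambda>\<^sup>2 + b \<lambda> - 1\<close> with real \<open>a, b\<close>: the constant term is \<open>det \<nabla>\<psi>\<^sub>T(x) = 1\<close>
  because, by Liouville's formula, the Wronskian of the variational equation of a divergence-free
  field is constant. Expressed through \<open>m\<close> and \<open>d\<close>, the values of this cubic at \<open>1\<close> and \<open>-1\<close>
  are \<open>-d T\<^sup>3\<close> and \<open>-(8 - 2 m T\<^sup>2 - 3 d T\<^sup>3)\<close>, whose quotient is \<open>\<Sigma>\<close>, and its discriminant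
  is \<open>-\<Delta>\<close>. As the roots have product 1, they are either all real or a positive real \<open>r\<close>
  together with a conjugate pair \<open>w, w\<^sup>*\<close> with \<open>r |w|\<^sup>2 = 1\<close>. In both cases the sign of
  \<open>\<Prod>(\<mu>\<^sub>i\<^sup>2 - 1)\<close>, the product of the two values above, decides how many roots lie inside the
  unit circle, a root of modulus one must be \<open>1\<close> or \<open>-1\<close>, and the sign of the discriminant separates
  real from non-real spectra.

  The analytic input is the differentiability of the time-\<open>T\<close> map, whose derivative is the
  solution operator of the variational equation (constructed by Picard iteration); the remainder
  is controlled by Gronwall's inequality once a continuation argument keeps nearby trajectories in
  a tube around the reference one.
\<close>

lemma mset3_eq_cases:
  assumes "{#a, b, c#} = {#x, y, z#}"
  shows "(a, b, c) = (x, y, z) \<or> (a, b, c) = (x, z, y) \<or> (a, b, c) = (y, x, z)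
       \<or> (a, b, c) = (y, z, x) \<or> (a, b, c) = (z, x, y) \<or> (a, b, c) = (z, y, x)"
  using assms by (auto simp: add_eq_conv_ex)

lemma mset3_eq_elementary_symmetric:
  fixes a b c x y z :: "'a::comm_ring_1"
  assumes "{#a, b, c#} = {#x, y, z#}"
  shows "a + b + c = x + y + z" "a*b + a*c + b*c = x*y + x*z + y*z" "a*b*c = x*y*z"
  using mset3_eq_cases[OF assms] by (auto simp: algebra_simps)

lemma length_filter_eq_size_filter_mset: "length (filter P xs) = size (filter_mset P (mset xs))"
  by (metis mset_filter size_mset)

lemma prod_eq_one_counts_pos:
  fixes x y z :: real
  assumes "x \<ge> 0" "y \<ge> 0" "z \<ge> 0" "x * y * z = 1" "(x - 1) * (y - 1) * (z - 1) > 0"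
  shows "length (filter (\<lambda>t. t < 1) [x, y, z]) = 2 \<and> length (filter (\<lambda>t. t > 1) [x, y, z]) = 1"
proof -
  have "\<not> (x > 1 \<and> y > 1 \<and> z > 1)"
  proof
    assume "x > 1 \<and> y > 1 \<and> z > 1"
    then have "x * y * z > 1" by (metis less_1_mult)
    then show False using assms by simp
  qed
  then show ?thesis using assms
    by (cases "x < 1"; cases "y < 1"; cases "z < 1") (auto simp: mult_less_0_iff zero_less_mult_iff)
qed

lemma prod_eq_one_counts_neg:
  fixes x y z :: real
  assumes "x \<ge> 0" "y \<ge> 0" "z \<ge> 0" "x * y * z = 1" "(x - 1) * (y - 1) * (z - 1) < 0"
  shows "length (filter (\<lambda>t. t < 1) [x, y, z]) = 1 \<and> length (filter (\<lambda>t. t > 1) [x, y, z]) = 2"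
proof -
  have "\<not> (x < 1 \<and> y < 1 \<and> z < 1)"
  proof
    assume "x < 1 \<and> y < 1 \<and> z < 1"
    then have "x * y \<le> 1" using assms by (intro mult_le_one) auto
    then have "x * y * z \<le> z" using assms by (intro mult_left_le_one_le) auto
    then show False using assms \<open>x < 1 \<and> y < 1 \<and> z < 1\<close> by simp
  qed
  then show ?thesis using assms
    by (cases "x < 1"; cases "y < 1"; cases "z < 1") (auto simp: mult_less_0_iff zero_less_mult_iff)
qed

lemma mult_eq_one_gt_one_iff:
  fixes x y :: real
  assumes "x * y = 1" "x > 0"
  shows "x > 1 \<longleftrightarrow> y < 1"
proof -
  have "y = 1 / x" using assms by (simp add: field_simps)
  then show ?thesis using assms(2) by (simp add: divide_less_eq_1_pos)
qed

definition cubic_discriminant :: "real \<Rightarrow> real \<Rightarrow> real \<Rightarrow> real" where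
  "cubic_discriminant a b c = a^2 * b^2 - 4 * b^3 - 4 * a^3 * c + 18 * a * b * c - 27 * c^2"

locale real_cubic_roots =
  fixes mu1 mu2 mu3 :: complex and a b c :: real
  assumes sum_roots: "mu1 + mu2 + mu3 = of_real a"
    and sum_pair_products: "mu1 * mu2 + mu1 * mu3 + mu2 * mu3 = of_real b"
    and prod_roots: "mu1 * mu2 * mu3 = of_real c"
begin

lemma cubic_eq: "(z - mu1) * (z - mu2) * (z - mu3) = z^3 - of_real a * z^2 + of_real b * z - of_real c"
proof -
  have "(z - mu1) * (z - mu2) * (z - mu3) = z^3 - (mu1 + mu2 + mu3) * z^2
      + (mu1 * mu2 + mu1 * mu3 + mu2 * mu3) * z - mu1 * mu2 * mu3"
    by (simp add: eval_nat_numeral algebra_simps)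
  then show ?thesis by (simp add: sum_roots sum_pair_products prod_roots)
qed

lemma cubic_at_real:
  "(of_real t - mu1) * (of_real t - mu2) * (of_real t - mu3) = of_real (t^3 - a * t^2 + b * t - c)"
  by (simp add: cubic_eq)

lemma discriminant_eq:
  "((mu1 - mu2) * (mu1 - mu3) * (mu2 - mu3))^2 = of_real (cubic_discriminant a b c)"
proof -
  have "((mu1 - mu2) * (mu1 - mu3) * (mu2 - mu3))^2
      = (mu1 + mu2 + mu3)^2 * (mu1 * mu2 + mu1 * mu3 + mu2 * mu3)^2
        - 4 * (mu1 * mu2 + mu1 * mu3 + mu2 * mu3)^3 - 4 * (mu1 + mu2 + mu3)^3 * (mu1 * mu2 * mu3)
        + 18 * (mu1 + mu2 + mu3) * (mu1 * mu2 + mu1 * mu3 + mu2 * mu3) * (mu1 * mu2 * mu3)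
        - 27 * (mu1 * mu2 * mu3)^2"
    by (simp add: eval_nat_numeral ring_distribs algebra_simps)
  then show ?thesis
    by (simp add: sum_roots sum_pair_products prod_roots cubic_discriminant_def)
qed

lemma cnj_root:
  assumes "z = mu1 \<or> z = mu2 \<or> z = mu3"
  shows "cnj z = mu1 \<or> cnj z = mu2 \<or> cnj z = mu3"
proof -
  have "cnj ((z - mu1) * (z - mu2) * (z - mu3)) = 0" using assms by auto
  then have "(cnj z - mu1) * (cnj z - mu2) * (cnj z - mu3) = 0" unfolding cubic_eq by simp
  then show ?thesis by auto
qed

lemma roots_cases:
  obtains (real) "Im mu1 = 0" "Im mu2 = 0" "Im mu3 = 0"
    | (conjugate_pair) r w where "{#mu1, mu2, mu3#} = {#of_real r, w, cnj w#}" "Im w \<noteq> 0"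
proof -
  have Im_sum: "Im mu1 + Im mu2 + Im mu3 = 0" using arg_cong[OF sum_roots, of Im] by simp
  have real_eq: "z = of_real (Re z)" if "Im z = 0" for z using that by (simp add: complex_eq_iff)
  consider "Im mu1 = 0" "Im mu2 = 0" | "Im mu1 \<noteq> 0" | "Im mu1 = 0" "Im mu2 \<noteq> 0" by blast
  then show thesis
  proof cases
    case 1
    then show thesis using real Im_sum by simp
  next
    case 2
    then have "cnj mu1 = mu2 \<or> cnj mu1 = mu3" using cnj_root[of mu1] by (auto simp: complex_eq_iff)
    then show thesis
    proof
      assume "cnj mu1 = mu2"
      then have "{#mu1, mu2, mu3#} = {#of_real (Re mu3), mu1, cnj mu1#}"
        using Im_sum real_eq[of mu3] by (auto simp: add_mset_commute)
      then show thesis using conjugate_pair 2 by blast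
    next
      assume "cnj mu1 = mu3"
      then have "{#mu1, mu2, mu3#} = {#of_real (Re mu2), mu1, cnj mu1#}"
        using Im_sum real_eq[of mu2] by (auto simp: add_mset_commute)
      then show thesis using conjugate_pair 2 by blast
    qed
  next
    case 3
    then have "cnj mu2 = mu3" using cnj_root[of mu2] by (auto simp: complex_eq_iff)
    then have "{#mu1, mu2, mu3#} = {#of_real (Re mu1), mu2, cnj mu2#}"
      using 3 real_eq[of mu1] by simp
    then show thesis using conjugate_pair 3 by blast
  qed
qed

lemma real_roots_discriminant:
  assumes "Im mu1 = 0" "Im mu2 = 0" "Im mu3 = 0"
  shows "cubic_discriminant a b c \<ge> 0"
    and "cubic_discriminant a b c = 0 \<longleftrightarrow> mu1 = mu2 \<or> mu1 = mu3 \<or> mu2 = mu3"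
proof -
  obtain r1 r2 r3 where mu: "mu1 = of_real r1" "mu2 = of_real r2" "mu3 = of_real r3"
    using assms by (metis complex_is_Real_iff Reals_cases)
  have "of_real (((r1 - r2) * (r1 - r3) * (r2 - r3))^2) = (of_real (cubic_discriminant a b c) :: complex)"
    using discriminant_eq unfolding mu by simp
  then have disc: "cubic_discriminant a b c = ((r1 - r2) * (r1 - r3) * (r2 - r3))^2"
    using of_real_eq_iff by metis
  show "cubic_discriminant a b c \<ge> 0" unfolding disc by simp
  show "cubic_discriminant a b c = 0 \<longleftrightarrow> mu1 = mu2 \<or> mu1 = mu3 \<or> mu2 = mu3"
    unfolding disc mu by simp
qed

lemma conjugate_pair_discriminant:
  assumes M: "{#mu1, mu2, mu3#} = {#of_real r, w, cnj w#}" and w: "Im w \<noteq> 0"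
  shows "cubic_discriminant a b c < 0"
proof -
  interpret pair: real_cubic_roots "of_real r" w "cnj w" a b c
    using mset3_eq_elementary_symmetric[OF M] sum_roots sum_pair_products prod_roots
    by unfold_locales simp_all
  have "(of_real r - w) * (of_real r - cnj w) = of_real ((cmod (of_real r - w))^2)"
    unfolding complex_norm_square by simp
  moreover have "(w - cnj w)^2 = of_real (-4 * (Im w)^2)"
    by (simp add: complex_eq_iff power2_eq_square)
  ultimately have "((of_real r - w) * (of_real r - cnj w) * (w - cnj w))^2
      = of_real (-4 * (Im w)^2 * (cmod (of_real r - w))^4)"
    by (simp add: power_mult_distrib)
  then have "cubic_discriminant a b c = -4 * (Im w)^2 * (cmod (of_real r - w))^4"
    using pair.discriminant_eq by (metis of_real_eq_iff)
  moreover have "cmod (of_real r - w) > 0" using w by (auto simp: complex_eq_iff)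
  ultimately show ?thesis using w by simp
qed

lemma discriminant_pos_imp_distinct_real:
  assumes "cubic_discriminant a b c > 0"
  shows "Im mu1 = 0 \<and> Im mu2 = 0 \<and> Im mu3 = 0 \<and> mu1 \<noteq> mu2 \<and> mu1 \<noteq> mu3 \<and> mu2 \<noteq> mu3"
proof (cases rule: roots_cases)
  case real
  then show ?thesis using real_roots_discriminant(2) assms by auto
next
  case (conjugate_pair r w)
  then show ?thesis using conjugate_pair_discriminant assms by fastforce
qed

lemma discriminant_neg_imp_conjugate_pair:
  assumes "cubic_discriminant a b c < 0"
  shows "\<exists>r w w'. {#r, w, w'#} = {#mu1, mu2, mu3#} \<and> Im r = 0 \<and> Im w \<noteq> 0 \<and> w' = cnj w"
proof (cases rule: roots_cases)
  case real
  then show ?thesis using real_roots_discriminant(1) assms by fastforce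
next
  case (conjugate_pair r w)
  then show ?thesis by (intro exI[of _ "of_real r"] exI[of _ w] exI[of _ "cnj w"]) simp
qed

lemma discriminant_zero_imp_repeated_real:
  assumes "cubic_discriminant a b c = 0"
  shows "Im mu1 = 0 \<and> Im mu2 = 0 \<and> Im mu3 = 0 \<and> (mu1 = mu2 \<or> mu1 = mu3 \<or> mu2 = mu3)"
proof (cases rule: roots_cases)
  case real
  then show ?thesis using real_roots_discriminant(2) assms by auto
next
  case (conjugate_pair r w)
  then show ?thesis using conjugate_pair_discriminant assms by fastforce
qed

end

locale unit_product_cubic_roots = real_cubic_roots mu1 mu2 mu3 a b 1
  for mu1 mu2 mu3 :: complex and a b :: real
begin

abbreviation inside_count :: nat where
  "inside_count \<equiv> length (filter (\<lambda>z. cmod z < 1) [mu1, mu2, mu3])"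

abbreviation outside_count :: nat where
  "outside_count \<equiv> length (filter (\<lambda>z. cmod z > 1) [mu1, mu2, mu3])"

lemma cubic_at_one: "(1 - mu1) * (1 - mu2) * (1 - mu3) = of_real (b - a)"
  using cubic_at_real[of 1] by simp

lemma cubic_at_minus_one: "(-1 - mu1) * (-1 - mu2) * (-1 - mu3) = - of_real (a + b + 2)"
  using cubic_at_real[of "-1"] by (simp add: algebra_simps)

lemma one_root_iff: "1 \<in> set [mu1, mu2, mu3] \<longleftrightarrow> b - a = 0"
proof -
  have "1 \<in> set [mu1, mu2, mu3] \<longleftrightarrow> (1 - mu1) * (1 - mu2) * (1 - mu3) = 0" by auto
  then show ?thesis unfolding cubic_at_one by simp
qed

lemma minus_one_root_iff: "-1 \<in> set [mu1, mu2, mu3] \<longleftrightarrow> a + b + 2 = 0"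
proof -
  have "-1 \<in> set [mu1, mu2, mu3] \<longleftrightarrow> (-1 - mu1) * (-1 - mu2) * (-1 - mu3) = 0" by auto
  then show ?thesis unfolding cubic_at_minus_one by (simp del: of_real_add)
qed

lemma square_product_eq: "(mu1^2 - 1) * (mu2^2 - 1) * (mu3^2 - 1) = - of_real ((b - a) * (a + b + 2))"
proof -
  have "(mu1^2 - 1) * (mu2^2 - 1) * (mu3^2 - 1)
      = ((1 - mu1) * (1 - mu2) * (1 - mu3)) * ((-1 - mu1) * (-1 - mu2) * (-1 - mu3))"
    by (simp add: power2_eq_square algebra_simps)
  then show ?thesis unfolding cubic_at_one cubic_at_minus_one by (simp del: of_real_add)
qed

lemma conjugate_pair_moduli:
  assumes M: "{#mu1, mu2, mu3#} = {#of_real r, w, cnj w#}"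
  shows "r * (cmod w)^2 = 1" "r > 0"
proof -
  have "of_real r * (w * cnj w) = 1"
    using mset3_eq_elementary_symmetric(3)[OF M] prod_roots by (simp add: mult.assoc)
  then have "of_real (r * (cmod w)^2) = (1 :: complex)"
    unfolding of_real_mult complex_norm_square .
  then show "r * (cmod w)^2 = 1" using of_real_eq_1_iff by blast
  then show "r > 0" by (smt (verit) mult_nonpos_nonneg zero_le_power2)
qed

lemma conjugate_pair_square_product:
  assumes M: "{#mu1, mu2, mu3#} = {#of_real r, w, cnj w#}" and w: "Im w \<noteq> 0"
  shows "(b - a) * (a + b + 2) = - (r^2 - 1) * (cmod (w^2 - 1))^2" and "cmod (w^2 - 1) > 0"
proof -
  have "(mu1^2 - 1) * (mu2^2 - 1) * (mu3^2 - 1) = (of_real r^2 - 1) * ((w^2 - 1) * cnj (w^2 - 1))"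
    using mset3_eq_cases[OF M] by (auto simp: ac_simps)
  also have "\<dots> = of_real ((r^2 - 1) * (cmod (w^2 - 1))^2)"
    unfolding complex_norm_square[symmetric] by simp
  finally have "- of_real ((b - a) * (a + b + 2)) = (of_real ((r^2 - 1) * (cmod (w^2 - 1))^2) :: complex)"
    unfolding square_product_eq .
  then have "- ((b - a) * (a + b + 2)) = (r^2 - 1) * (cmod (w^2 - 1))^2"
    by (simp only: of_real_minus[symmetric] of_real_eq_iff)
  then show "(b - a) * (a + b + 2) = - (r^2 - 1) * (cmod (w^2 - 1))^2" by linarith
  have "w^2 \<noteq> 1" using w by (auto simp: power2_eq_1_iff)
  then show "cmod (w^2 - 1) > 0" by simp
qed

lemma real_roots_counts:
  assumes "Im mu1 = 0" "Im mu2 = 0" "Im mu3 = 0"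
  shows "(b - a) * (a + b + 2) < 0 \<Longrightarrow> inside_count = 2 \<and> outside_count = 1"
    and "(b - a) * (a + b + 2) > 0 \<Longrightarrow> inside_count = 1 \<and> outside_count = 2"
proof -
  obtain r1 r2 r3 where mu: "mu1 = of_real r1" "mu2 = of_real r2" "mu3 = of_real r3"
    using assms by (metis complex_is_Real_iff Reals_cases)
  have "of_real (r1 * r2 * r3) = (1 :: complex)" using prod_roots unfolding mu by simp
  then have prod: "\<bar>r1\<bar> * \<bar>r2\<bar> * \<bar>r3\<bar> = 1" by (simp only: of_real_eq_1_iff abs_mult[symmetric] abs_one)
  have "of_real ((r1^2 - 1) * (r2^2 - 1) * (r3^2 - 1)) = (- of_real ((b - a) * (a + b + 2)) :: complex)"
    using square_product_eq unfolding mu by simp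
  then have "(b - a) * (a + b + 2) = - ((r1^2 - 1) * (r2^2 - 1) * (r3^2 - 1))"
    by (simp only: of_real_minus[symmetric] of_real_eq_iff)
  also have "r^2 - 1 = (\<bar>r\<bar> - 1) * (\<bar>r\<bar> + 1)" for r :: real
    by (simp add: algebra_simps abs_mult_self power2_eq_square)
  then have "(r1^2 - 1) * (r2^2 - 1) * (r3^2 - 1)
      = ((\<bar>r1\<bar> - 1) * (\<bar>r2\<bar> - 1) * (\<bar>r3\<bar> - 1)) * ((\<bar>r1\<bar> + 1) * (\<bar>r2\<bar> + 1) * (\<bar>r3\<bar> + 1))"
    by (simp only: ac_simps)
  finally have eq: "(b - a) * (a + b + 2)
      = - (((\<bar>r1\<bar> - 1) * (\<bar>r2\<bar> - 1) * (\<bar>r3\<bar> - 1)) * ((\<bar>r1\<bar> + 1) * (\<bar>r2\<bar> + 1) * (\<bar>r3\<bar> + 1)))" .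
  have pos: "(\<bar>r1\<bar> + 1) * (\<bar>r2\<bar> + 1) * (\<bar>r3\<bar> + 1) > 0" by simp
  have sign_mult_pos: "- (p * q) < 0 \<longleftrightarrow> p > 0" "- (p * q) > 0 \<longleftrightarrow> p < 0" if "q > 0" for p q :: real
    using that by (simp_all add: zero_less_mult_iff mult_less_0_iff)
  have sign: "(b - a) * (a + b + 2) < 0 \<longleftrightarrow> (\<bar>r1\<bar> - 1) * (\<bar>r2\<bar> - 1) * (\<bar>r3\<bar> - 1) > 0"
      "(b - a) * (a + b + 2) > 0 \<longleftrightarrow> (\<bar>r1\<bar> - 1) * (\<bar>r2\<bar> - 1) * (\<bar>r3\<bar> - 1) < 0"
    unfolding eq using sign_mult_pos[OF pos] by simp_all
  have len: "length (filter (\<lambda>z. P (cmod z)) [mu1, mu2, mu3]) = length (filter P [\<bar>r1\<bar>, \<bar>r2\<bar>, \<bar>r3\<bar>])"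
    for P unfolding mu by simp
  show "(b - a) * (a + b + 2) < 0 \<Longrightarrow> inside_count = 2 \<and> outside_count = 1"
    using prod_eq_one_counts_pos[OF _ _ _ prod] sign(1)
    unfolding len[of "\<lambda>t. t < 1"] len[of "\<lambda>t. t > 1"] by simp
  show "(b - a) * (a + b + 2) > 0 \<Longrightarrow> inside_count = 1 \<and> outside_count = 2"
    using prod_eq_one_counts_neg[OF _ _ _ prod] sign(2)
    unfolding len[of "\<lambda>t. t < 1"] len[of "\<lambda>t. t > 1"] by simp
qed

lemma conjugate_pair_counts:
  assumes M: "{#mu1, mu2, mu3#} = {#of_real r, w, cnj w#}" and w: "Im w \<noteq> 0"
  shows "(b - a) * (a + b + 2) < 0 \<Longrightarrow> inside_count = 2 \<and> outside_count = 1"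
    and "(b - a) * (a + b + 2) > 0 \<Longrightarrow> inside_count = 1 \<and> outside_count = 2"
proof -
  note moduli = conjugate_pair_moduli[OF M]
  note square_product = conjugate_pair_square_product[OF M w]
  have len: "length (filter P [mu1, mu2, mu3]) = length (filter P [of_real r, w, cnj w])" for P
    unfolding length_filter_eq_size_filter_mset using M by simp
  have "cmod w < 1 \<longleftrightarrow> (cmod w)^2 < 1" "cmod w > 1 \<longleftrightarrow> (cmod w)^2 > 1"
    using abs_square_less_1[of "cmod w"] abs_square_le_1[of "cmod w"] by auto
  moreover have "(cmod w)^2 > 0" using moduli(1) by (cases "w = 0") auto
  then have "r > 1 \<longleftrightarrow> (cmod w)^2 < 1" "(cmod w)^2 > 1 \<longleftrightarrow> r < 1"
    using mult_eq_one_gt_one_iff[OF moduli] mult_eq_one_gt_one_iff[of "(cmod w)^2" r] moduli(1)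
    by (simp_all add: mult.commute)
  ultimately have cmod_w: "cmod w < 1 \<longleftrightarrow> r > 1" "cmod w > 1 \<longleftrightarrow> r < 1" by simp_all
  have "r^2 > 1 \<longleftrightarrow> r > 1" "r^2 < 1 \<longleftrightarrow> r < 1"
    using abs_square_le_1[of r] abs_square_less_1[of r] moduli(2) by auto
  moreover have "(cmod (w^2 - 1))^2 > 0" using square_product(2) by simp
  ultimately have "(b - a) * (a + b + 2) < 0 \<longleftrightarrow> r > 1" "(b - a) * (a + b + 2) > 0 \<longleftrightarrow> r < 1"
    unfolding square_product(1) by (auto simp: mult_less_0_iff zero_less_mult_iff)
  then show "(b - a) * (a + b + 2) < 0 \<Longrightarrow> inside_count = 2 \<and> outside_count = 1"
      "(b - a) * (a + b + 2) > 0 \<Longrightarrow> inside_count = 1 \<and> outside_count = 2"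
    unfolding len using cmod_w moduli(2) by auto
qed

lemma two_inside_one_outside:
  assumes "(a - b) / (a + b + 2) > 0"
  shows "inside_count = 2 \<and> outside_count = 1"
proof -
  from assms have sign: "(b - a) * (a + b + 2) < 0" by (auto simp: zero_less_divide_iff mult_less_0_iff)
  show ?thesis
  proof (cases rule: roots_cases)
    case real
    from real_roots_counts(1)[OF real sign] show ?thesis .
  next
    case (conjugate_pair r w)
    from conjugate_pair_counts(1)[OF conjugate_pair sign] show ?thesis .
  qed
qed

lemma one_inside_two_outside:
  assumes "(a - b) / (a + b + 2) < 0"
  shows "inside_count = 1 \<and> outside_count = 2"
proof -
  from assms have sign: "(b - a) * (a + b + 2) > 0" by (auto simp: divide_less_0_iff zero_less_mult_iff)
  show ?thesis
  proof (cases rule: roots_cases)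
    case real
    from real_roots_counts(2)[OF real sign] show ?thesis .
  next
    case (conjugate_pair r w)
    from conjugate_pair_counts(2)[OF conjugate_pair sign] show ?thesis .
  qed
qed

lemma unit_modulus_root_iff:
  "(\<exists>z\<in>set [mu1, mu2, mu3]. cmod z = 1) \<longleftrightarrow> 1 \<in> set [mu1, mu2, mu3] \<or> -1 \<in> set [mu1, mu2, mu3]"
proof (cases rule: roots_cases)
  case real
  have "cmod z = 1 \<longleftrightarrow> z = 1 \<or> z = -1" if "Im z = 0" for z
    using that by (auto simp: complex_eq_iff cmod_eq_Re abs_if)
  then show ?thesis using real by auto
next
  case (conjugate_pair r w)
  note moduli = conjugate_pair_moduli[OF conjugate_pair(1)]
  have S: "set [mu1, mu2, mu3] = {of_real r, w, cnj w}"
    using arg_cong[OF conjugate_pair(1), of set_mset] by simp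
  have "(\<exists>z\<in>{of_real r, w, cnj w}. cmod z = 1) \<longleftrightarrow> r = 1"
    using moduli by (auto simp: abs_if)
  moreover have "1 \<in> {of_real r, w, cnj w} \<or> -1 \<in> {of_real r, w, cnj w} \<longleftrightarrow> r = 1"
    using moduli(2) conjugate_pair(2) by (auto simp: complex_eq_iff)
  ultimately show ?thesis unfolding S by simp
qed

lemma minus_one_root_imp_real:
  assumes "-1 \<in> set [mu1, mu2, mu3]"
  shows "Im mu1 = 0 \<and> Im mu2 = 0 \<and> Im mu3 = 0"
proof (cases rule: roots_cases)
  case (conjugate_pair r w)
  have "set [mu1, mu2, mu3] = {of_real r, w, cnj w}"
    using arg_cong[OF conjugate_pair(1), of set_mset] by simp
  then have "-1 \<in> {of_real r, w, cnj w}" using assms by simp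
  then show ?thesis using conjugate_pair(2) conjugate_pair_moduli(2)[OF conjugate_pair(1)]
    by (auto simp: complex_eq_iff)
qed auto

end

lemma charpoly_3x3:
  "charpoly J = [:- of_real (det J), of_real (minor_sum J), - of_real (trace J), 1:]"
  unfolding charpoly_def det_3 minor_sum_def trace_def sum_3 by (simp add: algebra_simps)

lemma charpoly_roots:
  assumes "charpoly J = [:-mu1, 1:] * [:-mu2, 1:] * [:-mu3, 1:]"
  shows "real_cubic_roots mu1 mu2 mu3 (trace J) (minor_sum J) (det J)"
proof -
  have "[:-mu1, 1:] * [:-mu2, 1:] * [:-mu3, 1:]
      = [:- (mu1 * mu2 * mu3), mu1 * mu2 + mu1 * mu3 + mu2 * mu3, - (mu1 + mu2 + mu3), 1:]"
    by (simp add: algebra_simps)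
  with assms[unfolded charpoly_3x3]
  have "[:- of_real (det J), of_real (minor_sum J), - of_real (trace J), 1:]
      = [:- (mu1 * mu2 * mu3), mu1 * mu2 + mu1 * mu3 + mu2 * mu3, - (mu1 + mu2 + mu3), 1:]"
    by (rule trans)
  then have "of_real (trace J) = mu1 + mu2 + mu3" "of_real (minor_sum J) = mu1 * mu2 + mu1 * mu3 + mu2 * mu3"
    "of_real (det J) = mu1 * mu2 * mu3"
    by (simp_all only: pCons_eq_iff neg_equal_iff_equal)
  then show ?thesis by unfold_locales simp_all
qed

lemma cplx_eigenvalue_iff_root:
  assumes "charpoly J = [:-mu1, 1:] * [:-mu2, 1:] * [:-mu3, 1:]"
  shows "cplx_eigenvalue J z \<longleftrightarrow> z \<in> set [mu1, mu2, mu3]"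
proof -
  have "poly [:-u, 1:] z = z - u" for u :: complex by simp
  then show ?thesis unfolding cplx_eigenvalue_def assms poly_mult by simp
qed

lemma trace_id_plus_smult: "trace (mat 1 + T *\<^sub>R N) = 3 + T * trace (N :: real^3^3)"
  unfolding trace_def sum_3 by (simp add: mat_def algebra_simps)

lemma minor_sum_id_plus_smult:
  "minor_sum (mat 1 + T *\<^sub>R N) = 3 + 2 * T * trace N + T^2 * minor_sum N"
  unfolding trace_def sum_3 minor_sum_def by (simp add: mat_def power2_eq_square algebra_simps)

lemma det_id_plus_smult:
  "det (mat 1 + T *\<^sub>R N) = 1 + T * trace N + T^2 * minor_sum N + T^3 * det (N :: real^3^3)"
  unfolding trace_def sum_3 minor_sum_def det_3 by (simp add: mat_def eval_nat_numeral algebra_simps)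

lemma unit_det_id_plus_smult_coefficients:
  fixes N :: "real^3^3"
  assumes "det (mat 1 + T *\<^sub>R N) = 1"
  shows "trace (mat 1 + T *\<^sub>R N) = 3 - minor_sum N * T^2 - det N * T^3"
    and "minor_sum (mat 1 + T *\<^sub>R N) = 3 - minor_sum N * T^2 - 2 * det N * T^3"
proof -
  have "T * trace N + T^2 * minor_sum N + T^3 * det N = 0"
    using assms unfolding det_id_plus_smult by simp
  then have "T * trace N = - minor_sum N * T^2 - det N * T^3" by (simp add: mult.commute)
  then show "trace (mat 1 + T *\<^sub>R N) = 3 - minor_sum N * T^2 - det N * T^3"
    and "minor_sum (mat 1 + T *\<^sub>R N) = 3 - minor_sum N * T^2 - 2 * det N * T^3"
    unfolding trace_id_plus_smult minor_sum_id_plus_smult by (simp_all add: mult.assoc)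
qed

lemma cubic_discriminant_mesochronic:
  "cubic_discriminant (3 - m * T^2 - d * T^3) (3 - m * T^2 - 2 * d * T^3) 1
    = 4 * d^4 * T^12 + 12 * d^3 * m * T^11 + 13 * d^2 * m^2 * T^10 + 6 * d * m^3 * T^9
      - (18 * d^2 * m - m^4) * T^8 - 18 * d * m^2 * T^7 - (27 * d^2 + 4 * m^3) * T^6"
  unfolding cubic_discriminant_def by (simp add: eval_nat_numeral algebra_simps)

lemma gronwall_exp:
  fixes g :: "real \<Rightarrow> real"
  assumes cont: "continuous_on {a..b} g" and L: "L > 0"
    and ineq: "\<And>t. t \<in> {a..b} \<Longrightarrow> g t \<le> c + L * integral {a..t} g"
    and t: "t \<in> {a..b}"
  shows "g t \<le> c * exp (L * (t - a))"
proof -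
  define G where "G s = integral {a..s} g" for s
  define K where "K s = exp (- L * (s - a)) * (c + L * G s)" for s
  have Gc: "continuous_on {a..b} G"
    unfolding G_def using indefinite_integral_continuous_1[OF integrable_continuous_real[OF cont]] .
  have Gd: "(G has_real_derivative g s) (at s)" if "s \<in> {a<..<b}" for s
  proof -
    have "(G has_real_derivative g s) (at s within {a..b})"
      using integral_has_vector_derivative[OF cont] that
      unfolding G_def has_real_derivative_iff_has_vector_derivative by auto
    then show ?thesis using that by (simp add: at_within_Icc_at)
  qed
  have "K t \<le> K a"
  proof (rule DERIV_nonpos_imp_decreasing_open[of a t K])
    show "a \<le> t" "continuous_on {a..t} K"
      using t unfolding K_def by (auto intro!: continuous_intros continuous_on_subset[OF Gc])
    fix s assume s: "a < s" "s < t"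
    have "(K has_real_derivative exp (- L * (s - a)) * L * (g s - (c + L * G s))) (at s)"
      unfolding K_def using s t
      by (auto intro!: derivative_eq_intros Gd simp: algebra_simps)
    moreover have "g s - (c + L * G s) \<le> 0" using ineq[of s] s t unfolding G_def by auto
    then have "exp (- L * (s - a)) * L * (g s - (c + L * G s)) \<le> 0"
      using L by (simp add: mult_nonneg_nonpos)
    ultimately show "\<exists>y. (K has_real_derivative y) (at s) \<and> y \<le> 0" by blast
  qed
  then have "exp (- L * (t - a)) * (c + L * G t) \<le> c" unfolding K_def G_def by simp
  then have "exp (- L * (t - a)) * (c + L * G t) * exp (L * (t - a)) \<le> c * exp (L * (t - a))"
    by (intro mult_right_mono) auto
  moreover have "exp (- L * (t - a)) * exp (L * (t - a)) = 1" by (simp add: exp_add[symmetric])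
  ultimately have "c + L * G t \<le> c * exp (L * (t - a))"
    by (metis (no_types, lifting) mult.assoc mult.commute mult.right_neutral)
  then show ?thesis using ineq[OF t] unfolding G_def by simp
qed

lemma continuous_barrier:
  fixes e :: "real \<Rightarrow> real"
  assumes cont: "continuous_on {a..b} e" and start: "e a < c"
    and step: "\<And>\<tau>. \<tau> \<in> {a..b} \<Longrightarrow> \<forall>s\<in>{a..\<tau>}. e s \<le> c \<Longrightarrow> e \<tau> < c"
  shows "\<forall>\<tau>\<in>{a..b}. e \<tau> < c"
proof (rule ccontr)
  define S where "S = {\<tau> \<in> {a..b}. c \<le> e \<tau>}"
  assume "\<not> (\<forall>\<tau>\<in>{a..b}. e \<tau> < c)"
  then have ne: "S \<noteq> {}" unfolding S_def by force
  have "closed S" unfolding S_def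
    using continuous_on_closed_Collect_le[OF continuous_on_const cont, of c] by simp
  moreover have bdd: "bdd_below S" unfolding S_def by (rule bdd_belowI[of _ a]) auto
  ultimately have "Inf S \<in> S" using closed_contains_Inf[OF ne] by blast
  then have ts: "Inf S \<in> {a..b}" "c \<le> e (Inf S)" unfolding S_def by auto
  have below: "e s < c" if "s \<in> {a..b}" "s < Inf S" for s
    using cInf_lower[OF _ bdd, of s] that unfolding S_def by force
  have "a < Inf S" using ts start by (cases "a = Inf S") auto
  have "(e \<longlongrightarrow> e (Inf S)) (at_left (Inf S))"
  proof -
    have "(e \<longlongrightarrow> e (Inf S)) (at (Inf S) within {a..b})"
      using cont ts(1) by (simp add: continuous_on_def)
    then have "(e \<longlongrightarrow> e (Inf S)) (at (Inf S) within {a..Inf S})"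
      by (rule tendsto_within_subset) (use ts(1) in auto)
    then show ?thesis using \<open>a < Inf S\<close> by (simp add: at_within_Icc_at_left)
  qed
  moreover have "eventually (\<lambda>s. e s \<le> c) (at_left (Inf S))"
    using eventually_at_left_real[OF \<open>a < Inf S\<close>]
    by eventually_elim (use below ts(1) in \<open>auto intro: less_imp_le\<close>)
  ultimately have "e (Inf S) \<le> c" by (rule tendsto_upperbound) simp
  then have "\<forall>s\<in>{a..Inf S}. e s \<le> c" using below ts(1) by (fastforce simp: le_less)
  then show False using step[OF ts(1)] ts(2) by simp
qed

lemma has_integral_power_fact:
  fixes a t L c :: real
  assumes "a \<le> t"
  shows "((\<lambda>s. c * L * (L * (s - a))^k / fact k) has_integral c * (L * (t - a))^Suc k / fact (Suc k)) {a..t}"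
proof -
  have "((\<lambda>s. c * L * (L * (s - a))^k / fact k) has_integral
      c * (L * (t - a))^Suc k / fact (Suc k) - c * (L * (a - a))^Suc k / fact (Suc k)) {a..t}"
  proof (rule fundamental_theorem_of_calculus[OF assms])
    fix s assume "s \<in> {a..t}"
    have "((\<lambda>s. (L * (s - a))^n) has_real_derivative real n * (L * (s - a))^(n - 1) * L)
        (at s within {a..t})" for n
      by (auto intro!: derivative_eq_intros)
    from DERIV_cdivide[OF DERIV_cmult[OF this[of "Suc k", unfolded diff_Suc_1]], of c "fact (Suc k)"]
    have "((\<lambda>s. c * (L * (s - a))^Suc k / fact (Suc k)) has_real_derivative
        c * (real (Suc k) * (L * (s - a))^k * L) / fact (Suc k)) (at s within {a..t})" by simp
    moreover have "c * (real (Suc k) * (L * (s - a))^k * L) / fact (Suc k)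
        = real (Suc k) * (c * L * (L * (s - a))^k) / (real (Suc k) * fact k)"
      by (simp only: fact_Suc of_nat_mult mult_ac)
    then have "c * (real (Suc k) * (L * (s - a))^k * L) / fact (Suc k) = c * L * (L * (s - a))^k / fact k"
      by (simp only: mult_divide_mult_cancel_left of_nat_Suc)
    ultimately show "((\<lambda>s. c * (L * (s - a))^Suc k / fact (Suc k)) has_vector_derivative
        c * L * (L * (s - a))^k / fact k) (at s within {a..t})"
      by (simp add: has_real_derivative_iff_has_vector_derivative mult_ac)
  qed
  then show ?thesis by simp
qed

primrec picard_term :: "(real \<Rightarrow> 'a::euclidean_space \<Rightarrow> 'a) \<Rightarrow> real \<Rightarrow> 'a \<Rightarrow> nat \<Rightarrow> real \<Rightarrow> 'a" where
  "picard_term B a v 0 = (\<lambda>s. v)"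
| "picard_term B a v (Suc k) = (\<lambda>\<tau>. integral {a..\<tau>} (\<lambda>s. B s (picard_term B a v k s)))"

lemma picard_term_bound:
  fixes B :: "real \<Rightarrow> 'a::euclidean_space \<Rightarrow> 'a"
  assumes L: "L \<ge> 0"
    and bnd: "\<And>s w. s \<in> {a..b} \<Longrightarrow> norm (B s w) \<le> L * norm w"
    and cont: "\<And>u. continuous_on {a..b} u \<Longrightarrow> continuous_on {a..b} (\<lambda>s. B s (u s))"
  shows "continuous_on {a..b} (picard_term B a v k)
    \<and> (\<forall>\<tau>\<in>{a..b}. norm (picard_term B a v k \<tau>) \<le> norm v * (L * (\<tau> - a))^k / fact k)"
proof (induction k)
  case (Suc k)
  let ?P = "picard_term B a v k"
  have c: "continuous_on {a..b} (\<lambda>s. B s (?P s))" using Suc.IH cont by blast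
  have "norm (picard_term B a v (Suc k) \<tau>) \<le> norm v * (L * (\<tau> - a))^Suc k / fact (Suc k)"
    if \<tau>: "\<tau> \<in> {a..b}" for \<tau>
  proof -
    have sub: "{a..\<tau>} \<subseteq> {a..b}" using \<tau> by auto
    have "norm (integral {a..\<tau>} (\<lambda>s. B s (?P s)))
        \<le> integral {a..\<tau>} (\<lambda>s. norm v * L * (L * (s - a))^k / fact k)"
    proof (rule integral_norm_bound_integral)
      show "(\<lambda>s. B s (?P s)) integrable_on {a..\<tau>}"
        using integrable_continuous_real[OF continuous_on_subset[OF c sub]] by simp
      show "(\<lambda>s. norm v * L * (L * (s - a))^k / fact k) integrable_on {a..\<tau>}"
        using has_integral_power_fact[of a \<tau> "norm v" L k] \<tau> by (auto intro: has_integral_integrable)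
      fix s assume s: "s \<in> {a..\<tau>}"
      have "norm (B s (?P s)) \<le> L * norm (?P s)" using bnd s sub by auto
      also have "\<dots> \<le> L * (norm v * (L * (s - a))^k / fact k)"
        using Suc.IH s sub L by (intro mult_left_mono) auto
      finally show "norm (B s (?P s)) \<le> norm v * L * (L * (s - a))^k / fact k" by (simp add: mult_ac)
    qed
    also have "\<dots> = norm v * (L * (\<tau> - a))^Suc k / fact (Suc k)"
      using \<tau> by (intro integral_unique has_integral_power_fact) simp
    finally show ?thesis by simp
  qed
  moreover have "continuous_on {a..b} (picard_term B a v (Suc k))"
    using indefinite_integral_continuous_1[OF integrable_continuous_real[OF c]] by simp
  ultimately show ?case by blast
qed simp

lemma uniform_limit_bounded_linear_family:
  fixes B :: "'s \<Rightarrow> 'a::real_normed_vector \<Rightarrow> 'b::real_normed_vector"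
  assumes ul: "uniform_limit S g h F" and L: "L \<ge> 0"
    and lin: "\<And>s. linear (B s)"
    and bnd: "\<And>s w. s \<in> S \<Longrightarrow> norm (B s w) \<le> L * norm w"
  shows "uniform_limit S (\<lambda>n s. B s (g n s)) (\<lambda>s. B s (h s)) F"
  unfolding uniform_limit_iff
proof (intro allI impI)
  fix e :: real assume e: "e > 0"
  have "\<forall>\<^sub>F n in F. \<forall>s\<in>S. dist (g n s) (h s) < e / (L + 1)"
    using ul e L unfolding uniform_limit_iff by simp
  then show "\<forall>\<^sub>F n in F. \<forall>s\<in>S. dist (B s (g n s)) (B s (h s)) < e"
  proof eventually_elim
    case (elim n)
    show ?case
    proof
      fix s assume s: "s \<in> S"
      have "dist (B s (g n s)) (B s (h s)) = norm (B s (g n s - h s))"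
        by (simp add: dist_norm linear_diff[OF lin])
      also have "\<dots> \<le> L * norm (g n s - h s)" using bnd s by auto
      also have "\<dots> \<le> L * (e / (L + 1))"
        using elim s L by (intro mult_left_mono) (auto simp: dist_norm less_imp_le)
      also have "\<dots> < e" using e L by (simp add: field_simps)
      finally show "dist (B s (g n s)) (B s (h s)) < e" .
    qed
  qed
qed

lemma picard_partial_sum_eq:
  fixes B :: "real \<Rightarrow> 'a::euclidean_space \<Rightarrow> 'a"
  assumes lin: "\<And>s. linear (B s)"
    and int: "\<And>i. (\<lambda>s. B s (picard_term B a v i s)) integrable_on {a..\<tau>}"
  shows "(\<Sum>i<Suc n. picard_term B a v i \<tau>) = v + integral {a..\<tau>} (\<lambda>s. B s (\<Sum>i<n. picard_term B a v i s))"
proof -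
  have "(\<Sum>i<Suc n. picard_term B a v i \<tau>) = picard_term B a v 0 \<tau> + (\<Sum>i<n. picard_term B a v (Suc i) \<tau>)"
    by (rule sum.lessThan_Suc_shift)
  also have "\<dots> = v + (\<Sum>i<n. integral {a..\<tau>} (\<lambda>s. B s (picard_term B a v i s)))" by simp
  also have "(\<Sum>i<n. integral {a..\<tau>} (\<lambda>s. B s (picard_term B a v i s)))
      = integral {a..\<tau>} (\<lambda>s. \<Sum>i<n. B s (picard_term B a v i s))"
    by (rule integral_sum[symmetric]) (auto intro: int)
  also have "(\<lambda>s. \<Sum>i<n. B s (picard_term B a v i s)) = (\<lambda>s. B s (\<Sum>i<n. picard_term B a v i s))"
    by (intro ext) (rule linear_sum[OF lin, symmetric])
  finally show ?thesis .
qed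

lemma picard_series_uniform_limit:
  fixes B :: "real \<Rightarrow> 'a::euclidean_space \<Rightarrow> 'a"
  assumes L: "L \<ge> 0"
    and bnd: "\<And>s w. s \<in> {a..b} \<Longrightarrow> norm (B s w) \<le> L * norm w"
    and cont: "\<And>u. continuous_on {a..b} u \<Longrightarrow> continuous_on {a..b} (\<lambda>s. B s (u s))"
  shows "uniform_limit {a..b} (\<lambda>n \<tau>. \<Sum>i<n. picard_term B a v i \<tau>) (\<lambda>\<tau>. \<Sum>i. picard_term B a v i \<tau>)
    sequentially"
proof -
  define M where "M k = norm v * (L * (b - a))^k / fact k" for k
  have "norm (picard_term B a v k \<tau>) \<le> M k" if "\<tau> \<in> {a..b}" for k \<tau>
  proof -
    have "norm (picard_term B a v k \<tau>) \<le> norm v * (L * (\<tau> - a))^k / fact k"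
      using picard_term_bound[OF L bnd cont] that by blast
    also have "\<dots> \<le> M k" unfolding M_def using that L
      by (intro divide_right_mono mult_left_mono power_mono) auto
    finally show ?thesis .
  qed
  moreover have "summable M" unfolding M_def
    using summable_mult[OF summable_exp[of "L * (b - a)"], of "norm v"] by (simp add: divide_inverse mult_ac)
  ultimately show ?thesis by (rule Weierstrass_m_test)
qed

lemma linear_ode_solution_exists:
  fixes B :: "real \<Rightarrow> 'a::euclidean_space \<Rightarrow> 'a"
  assumes L: "L \<ge> 0"
    and lin: "\<And>s. linear (B s)"
    and bnd: "\<And>s w. s \<in> {a..b} \<Longrightarrow> norm (B s w) \<le> L * norm w"
    and cont: "\<And>u. continuous_on {a..b} u \<Longrightarrow> continuous_on {a..b} (\<lambda>s. B s (u s))"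
  shows "\<exists>u. continuous_on {a..b} u \<and> (\<forall>\<tau>\<in>{a..b}. u \<tau> = v + integral {a..\<tau>} (\<lambda>s. B s (u s)))"
proof -
  let ?P = "picard_term B a v"
  note P = picard_term_bound[OF L bnd cont]
  note ul = picard_series_uniform_limit[OF L bnd cont, of v]
  have sum_cont: "continuous_on {a..b} (\<lambda>\<tau>. \<Sum>i<n. ?P i \<tau>)" for n
    using P by (intro continuous_on_sum) auto
  have "(\<Sum>i. ?P i \<tau>) = v + integral {a..\<tau>} (\<lambda>s. B s (\<Sum>i. ?P i s))" if \<tau>: "\<tau> \<in> {a..b}" for \<tau>
  proof -
    have sub: "{a..\<tau>} \<subseteq> {a..b}" using \<tau> by auto
    have "uniform_limit (cbox a \<tau>) (\<lambda>n s. B s (\<Sum>i<n. ?P i s)) (\<lambda>s. B s (\<Sum>i. ?P i s)) sequentially"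
      using uniform_limit_on_subset[OF ul sub] unfolding cbox_interval
      by (rule uniform_limit_bounded_linear_family[OF _ L lin]) (use bnd sub in auto)
    moreover have "continuous_on (cbox a \<tau>) (\<lambda>s. B s (\<Sum>i<n. ?P i s))" for n
      using cont[OF sum_cont] by (auto intro: continuous_on_subset[OF _ sub])
    ultimately obtain I J where I: "\<And>n. ((\<lambda>s. B s (\<Sum>i<n. ?P i s)) has_integral I n) (cbox a \<tau>)"
      and J: "((\<lambda>s. B s (\<Sum>i. ?P i s)) has_integral J) (cbox a \<tau>)" and IJ: "I \<longlonglongrightarrow> J"
      by (rule uniform_limit_integral_cbox) auto
    have int: "(\<lambda>s. B s (?P i s)) integrable_on {a..\<tau>}" for i
      using P cont by (intro integrable_continuous_real continuous_on_subset[OF _ sub]) blast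
    have "integral {a..\<tau>} (\<lambda>s. B s (\<Sum>i<n. ?P i s)) = I n" for n
      using I[of n] by (simp add: integral_unique)
    then have "(\<lambda>n. \<Sum>i<Suc n. ?P i \<tau>) \<longlonglongrightarrow> v + J"
      unfolding picard_partial_sum_eq[OF lin int] using IJ by (simp add: tendsto_add)
    moreover have "(\<lambda>n. \<Sum>i<Suc n. ?P i \<tau>) \<longlonglongrightarrow> (\<Sum>i. ?P i \<tau>)"
      using LIMSEQ_Suc[OF tendsto_uniform_limitI[OF ul \<tau>]] .
    ultimately have "(\<Sum>i. ?P i \<tau>) = v + J" using LIMSEQ_unique by blast
    then show ?thesis using J by (simp add: integral_unique)
  qed
  moreover have "continuous_on {a..b} (\<lambda>\<tau>. \<Sum>i. ?P i \<tau>)"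
    by (rule uniform_limit_theorem[OF _ ul]) (auto intro!: always_eventually sum_cont)
  ultimately show ?thesis by blast
qed

lemma norm_blinfun_Pair_zero_le: "norm (blinfun_apply F (0, v)) \<le> norm F * norm v"
  using norm_blinfun[of F "(0, v)"] by (simp add: norm_Pair)

lemma jacobian_id_plus_smult:
  fixes \<psi> g :: "real^'n \<Rightarrow> real^'n"
  assumes d: "(\<psi> has_derivative \<psi>') (at x)" and X: "open X" "x \<in> X" and T: "T \<noteq> 0"
    and g: "\<And>y. y \<in> X \<Longrightarrow> g y = (1 / T) *\<^sub>R (\<psi> y - y)"
  shows "jacobian \<psi> (at x) = mat 1 + T *\<^sub>R jacobian g (at x)"
proof -
  have dg: "(g has_derivative (\<lambda>v. (1 / T) *\<^sub>R (\<psi>' v - v))) (at x)"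
  proof (rule has_derivative_transform_within_open[OF _ X])
    show "((\<lambda>y. (1 / T) *\<^sub>R (\<psi> y - y)) has_derivative (\<lambda>v. (1 / T) *\<^sub>R (\<psi>' v - v))) (at x)"
      using d by (auto intro!: derivative_eq_intros)
  qed (use g in simp)
  have "jacobian g (at x) = matrix (\<lambda>v. (1 / T) *\<^sub>R (\<psi>' v - v))"
    unfolding jacobian_def using frechet_derivative_at[OF dg] by simp
  moreover have "jacobian \<psi> (at x) = matrix \<psi>'"
    unfolding jacobian_def using frechet_derivative_at[OF d] by simp
  ultimately show ?thesis using T by (simp add: vec_eq_iff matrix_def mat_def axis_def)
qed

lemma has_real_derivative_vec_nth:
  assumes "(g has_vector_derivative g') (at t within S)"
  shows "((\<lambda>t. g t $ j) has_real_derivative g' $ j) (at t within S)"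
proof -
  have "((\<lambda>t. g t $ j) has_derivative (\<lambda>h. (h *\<^sub>R g') $ j)) (at t within S)"
    using bounded_linear.has_derivative[OF bounded_linear_vec_nth assms[unfolded has_vector_derivative_def]] .
  moreover have "(\<lambda>h. (h *\<^sub>R g') $ j) = (*) (g' $ j)" by (simp add: fun_eq_iff)
  ultimately show ?thesis unfolding has_field_derivative_def by simp
qed

lemma det_3_has_real_derivative:
  fixes c :: "3 \<Rightarrow> 3 \<Rightarrow> real \<Rightarrow> real" and a :: "3 \<Rightarrow> 3 \<Rightarrow> real"
  assumes "\<And>j k. (c j k has_real_derivative a j 1 * c 1 k \<tau> + a j 2 * c 2 k \<tau> + a j 3 * c 3 k \<tau>) (at \<tau> within S)"
  shows "((\<lambda>t. det (\<chi> j k. c j k t)) has_real_derivative (a 1 1 + a 2 2 + a 3 3) * det (\<chi> j k. c j k \<tau>))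
    (at \<tau> within S)"
  unfolding det_3 vec_lambda_beta by (auto intro!: derivative_eq_intros assms simp: algebra_simps)

lemma C2_on_imp_continuous_on: "C2_on f S \<Longrightarrow> continuous_on S f"
  unfolding C2_on_def by (meson continuous_at_imp_continuous_on has_derivative_continuous)

lemma C3_on_imp_C1_on: "C3_on f S \<Longrightarrow> C1_on f S"
  unfolding C3_on_def C1_on_def using C2_on_imp_continuous_on by blast

locale ode_flow =
  fixes f :: "real \<Rightarrow> real^3 \<Rightarrow> real^3"
    and D :: "(real \<times> (real^3)) set"
    and phi :: "real \<Rightarrow> real \<Rightarrow> real^3 \<Rightarrow> real^3"
    and X :: "(real^3) set"
    and t0 T :: real and x :: "real^3"
    and F' :: "real \<times> (real^3) \<Rightarrow> (real \<times> (real^3)) \<Rightarrow>\<^sub>L (real^3)"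
  assumes D_open: "open D"
    and F'_deriv: "\<And>p. p \<in> D \<Longrightarrow> ((\<lambda>(t, y). f t y) has_derivative blinfun_apply (F' p)) (at p)"
    and F'_cont: "continuous_on D F'"
    and T_pos: "T > 0"
    and X_open: "open X"
    and sol_init: "\<forall>y\<in>X. phi t0 t0 y = y"
    and sol_dom: "\<forall>y\<in>X. \<forall>\<tau>\<in>{t0..t0+T}. (\<tau>, phi \<tau> t0 y) \<in> D"
    and sol_ode: "\<forall>y\<in>X. \<forall>\<tau>\<in>{t0..t0+T}.
          ((\<lambda>s. phi s t0 y) has_vector_derivative f \<tau> (phi \<tau> t0 y)) (at \<tau> within {t0..t0+T})"
    and x_in: "x \<in> X"
begin

abbreviation I :: "real set" where "I \<equiv> {t0..t0+T}"

definition traj :: "real^3 \<Rightarrow> real \<Rightarrow> real^3" where "traj y s = phi s t0 y"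

lemma f_has_derivative:
  assumes "(s, z) \<in> D"
  shows "(f s has_derivative (\<lambda>v. F' (s, z) (0, v))) (at z)"
proof -
  have "((\<lambda>z. (s, z)) has_derivative (\<lambda>v. (0, v))) (at z)"
    by (auto intro!: derivative_eq_intros)
  from has_derivative_compose[OF this F'_deriv[OF assms]] show ?thesis by simp
qed

lemma f_continuous_on: "continuous_on D (\<lambda>(t, y). f t y)"
  using F'_deriv by (meson continuous_at_imp_continuous_on has_derivative_continuous)

lemma traj_continuous_on: "y \<in> X \<Longrightarrow> continuous_on I (traj y)"
  unfolding traj_def using sol_ode
  by (intro continuous_on_vector_derivative[where f' = "\<lambda>\<tau>. f \<tau> (phi \<tau> t0 y)"]) auto

lemma f_traj_continuous_on:
  assumes y: "y \<in> X"
  shows "continuous_on I (\<lambda>s. f s (traj y s))"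
proof -
  have "continuous_on I (\<lambda>s. (s, traj y s))" using traj_continuous_on[OF y] by (intro continuous_intros)
  moreover have "(\<lambda>s. (s, traj y s)) ` I \<subseteq> D" using sol_dom y by (auto simp: traj_def)
  ultimately have "continuous_on I ((\<lambda>(t, y). f t y) \<circ> (\<lambda>s. (s, traj y s)))"
    using continuous_on_subset[OF f_continuous_on] continuous_on_compose by blast
  then show ?thesis by (simp add: o_def)
qed

lemma f_traj_integrable_on:
  assumes "y \<in> X" "t \<in> I"
  shows "(\<lambda>s. f s (traj y s)) integrable_on {t0..t}"
  using assms by (intro integrable_continuous_real continuous_on_subset[OF f_traj_continuous_on]) auto

lemma traj_integral_eq:
  assumes y: "y \<in> X" and tau: "\<tau> \<in> I"
  shows "traj y \<tau> = y + integral {t0..\<tau>} (\<lambda>s. f s (traj y s))"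
proof -
  have "((\<lambda>s. f s (traj y s)) has_integral (traj y \<tau> - traj y t0)) {t0..\<tau>}"
  proof (rule fundamental_theorem_of_calculus)
    show "t0 \<le> \<tau>" using tau by simp
    fix s assume s: "s \<in> {t0..\<tau>}"
    then have "(traj y has_vector_derivative f s (traj y s)) (at s within I)"
      using sol_ode y tau unfolding traj_def by auto
    then show "(traj y has_vector_derivative f s (traj y s)) (at s within {t0..\<tau>})"
      by (rule has_vector_derivative_within_subset) (use tau in auto)
  qed
  moreover have "traj y t0 = y" using sol_init y by (simp add: traj_def)
  ultimately show ?thesis by (simp add: integral_unique)
qed

definition tube :: "real \<Rightarrow> (real \<times> (real^3)) set" where
  "tube r = {p. fst p \<in> I \<and> dist (snd p) (traj x (fst p)) \<le> r}"

lemma mem_tube [simp]: "(s, z) \<in> tube r \<longleftrightarrow> s \<in> I \<and> dist z (traj x s) \<le> r"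
  by (simp add: tube_def)

lemma compact_tube: "compact (tube r)"
proof -
  have "tube r = (\<lambda>p. (fst p, traj x (fst p) + snd p)) ` (I \<times> cball 0 r)"
  proof (intro set_eqI iffI)
    fix p assume "p \<in> tube r"
    then have "(fst p, snd p - traj x (fst p)) \<in> I \<times> cball 0 r"
      by (auto simp: tube_def dist_norm norm_minus_commute)
    then show "p \<in> (\<lambda>p. (fst p, traj x (fst p) + snd p)) ` (I \<times> cball 0 r)" by force
  qed (auto simp: tube_def dist_norm)
  moreover have "continuous_on (I \<times> cball 0 r) (\<lambda>p. traj x (fst p))"
    using traj_continuous_on[OF x_in] by (rule continuous_on_compose2) (auto intro: continuous_intros)
  then have "compact ((\<lambda>p. (fst p, traj x (fst p) + snd p)) ` (I \<times> cball 0 r))"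
    by (intro compact_continuous_image compact_Times continuous_intros) auto
  ultimately show ?thesis by simp
qed

lemma tube_subset_exists: "\<exists>r>0. tube r \<subseteq> D"
proof -
  have "compact ((\<lambda>s. (s, traj x s)) ` I)"
    using traj_continuous_on[OF x_in] by (intro compact_continuous_image continuous_intros) auto
  moreover have "(\<lambda>s. (s, traj x s)) ` I \<subseteq> D" using sol_dom x_in by (auto simp: traj_def)
  ultimately obtain e where e: "e > 0" "(\<Union>p\<in>(\<lambda>s. (s, traj x s)) ` I. cball p e) \<subseteq> D"
    using compact_subset_open_imp_cball_epsilon_subset[OF _ D_open] by blast
  have "(s, z) \<in> D" if "(s, z) \<in> tube e" for s z
  proof -
    have "(s, z) \<in> cball (s, traj x s) e" using that by (simp add: dist_Pair_Pair dist_commute)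
    moreover have "s \<in> I" using that by simp
    ultimately show ?thesis using e(2) by blast
  qed
  then show ?thesis using e by auto
qed

lemma derivative_bound_on_tube:
  assumes "tube r \<subseteq> D"
  shows "\<exists>L>0. \<forall>p\<in>tube r. norm (F' p) \<le> L"
proof -
  have "compact (F' ` tube r)"
    using compact_continuous_image[OF continuous_on_subset[OF F'_cont assms] compact_tube] .
  then obtain B where "\<forall>q\<in>F' ` tube r. norm q \<le> B" using compact_imp_bounded bounded_iff by blast
  then show ?thesis by (intro exI[of _ "max B 1"]) force
qed

end

locale ode_flow_tube = ode_flow +
  fixes r L :: real
  assumes r_pos: "r > 0"
    and tube_subset: "tube r \<subseteq> D"
    and L_pos: "L > 0"
    and F'_bound: "\<And>p. p \<in> tube r \<Longrightarrow> norm (F' p) \<le> L"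
begin

lemma near_traj_in_D: "s \<in> I \<Longrightarrow> dist z (traj x s) \<le> r \<Longrightarrow> (s, z) \<in> D"
  using tube_subset by auto

definition A :: "real \<Rightarrow> real^3 \<Rightarrow> real^3" where "A s v = F' (s, traj x s) (0, v)"

lemma linear_A: "linear (A s)"
  unfolding A_def by (intro linearI) (auto simp: blinfun.add_right[symmetric] blinfun.scaleR_right[symmetric])

lemma norm_F'_Pair_zero_le:
  assumes "s \<in> I" "dist z (traj x s) \<le> r"
  shows "norm (F' (s, z) (0, v)) \<le> L * norm v"
proof -
  have "norm (F' (s, z) (0, v)) \<le> norm (F' (s, z)) * norm v" by (rule norm_blinfun_Pair_zero_le)
  also have "\<dots> \<le> L * norm v" using F'_bound[of "(s, z)"] assms by (intro mult_right_mono) auto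
  finally show ?thesis .
qed

lemma norm_A_le: "s \<in> I \<Longrightarrow> norm (A s v) \<le> L * norm v"
  unfolding A_def using r_pos by (intro norm_F'_Pair_zero_le) auto

lemma continuous_on_A: "continuous_on I u \<Longrightarrow> continuous_on I (\<lambda>s. A s (u s))"
proof -
  assume u: "continuous_on I u"
  have "continuous_on I (\<lambda>s. (s, traj x s))" using traj_continuous_on[OF x_in] by (intro continuous_intros)
  moreover have "(\<lambda>s. (s, traj x s)) ` I \<subseteq> D" using near_traj_in_D r_pos by auto
  ultimately have "continuous_on I (\<lambda>s. F' (s, traj x s))"
    using continuous_on_compose[of I _ F'] continuous_on_subset[OF F'_cont] by (auto simp: o_def)
  then show ?thesis unfolding A_def using u by (intro continuous_intros) auto
qed

lemma f_lipschitz_on_tube: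
  assumes s: "s \<in> I" and z: "dist z (traj x s) \<le> r"
  shows "norm (f s z - f s (traj x s)) \<le> L * norm (z - traj x s)"
proof (rule differentiable_bound[where S = "cball (traj x s) r" and f' = "\<lambda>z' v. F' (s, z') (0, v)"])
  fix z' assume "z' \<in> cball (traj x s) r"
  then have z': "dist z' (traj x s) \<le> r" by (simp add: dist_commute)
  show "(f s has_derivative (\<lambda>v. F' (s, z') (0, v))) (at z' within cball (traj x s) r)"
    using f_has_derivative[OF near_traj_in_D[OF s z']] by (rule has_derivative_at_withinI)
  show "onorm (\<lambda>v. F' (s, z') (0, v)) \<le> L"
    using norm_F'_Pair_zero_le[OF s z'] by (intro onorm_le) auto
qed (use z r_pos in \<open>auto simp: dist_commute\<close>)

lemma f_linearization:
  assumes e: "e > 0"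
  shows "\<exists>d>0. d \<le> r \<and> (\<forall>s\<in>I. \<forall>z. dist z (traj x s) \<le> d \<longrightarrow>
            norm (f s z - f s (traj x s) - A s (z - traj x s)) \<le> e * norm (z - traj x s))"
proof -
  have "uniformly_continuous_on (tube r) F'"
    using continuous_on_subset[OF F'_cont tube_subset] compact_tube by (rule compact_uniformly_continuous)
  then obtain d0 where d0: "d0 > 0"
    "\<And>p p'. p \<in> tube r \<Longrightarrow> p' \<in> tube r \<Longrightarrow> dist p' p < d0 \<Longrightarrow> dist (F' p') (F' p) < e"
    unfolding uniformly_continuous_on_def using e by blast
  define d where "d = min r (d0 / 2)"
  have d: "d > 0" "d \<le> r" "d < d0" using r_pos d0 by (auto simp: d_def)
  have "norm (f s z - f s q - F' (s, q) (0, z - q)) \<le> norm (z - q) * e"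
    if s: "s \<in> I" and q: "q = traj x s" and z: "dist z q \<le> d" for s z q
  proof (rule differentiable_bound_linearization[where S = "cball q d" and f' = "\<lambda>z' v. F' (s, z') (0, v)"])
    fix t :: real assume t: "t \<in> {0..1}"
    have "dist q (q + t *\<^sub>R (z - q)) \<le> norm (z - q)"
      using t by (simp add: dist_norm mult_left_le_one_le)
    then show "q + t *\<^sub>R (z - q) \<in> cball q d" using z by (simp add: dist_norm norm_minus_commute)
  next
    fix z' assume z': "z' \<in> cball q d"
    then have zr: "dist z' (traj x s) \<le> r" using d q by (simp add: dist_commute)
    show "(f s has_derivative (\<lambda>v. F' (s, z') (0, v))) (at z' within cball q d)"
      using f_has_derivative[OF near_traj_in_D[OF s zr]] by (rule has_derivative_at_withinI)
    have "dist (s, z') (s, q) < d0" using z' d by (simp add: dist_Pair_Pair dist_commute)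
    then have "norm (F' (s, z') - F' (s, q)) < e"
      using d0(2)[of "(s, q)" "(s, z')"] s zr q r_pos by (simp add: dist_norm)
    then show "onorm ((\<lambda>v. F' (s, z') (0, v)) - (\<lambda>v. F' (s, q) (0, v))) \<le> e"
    proof (intro onorm_le)
      fix v
      have "norm ((F' (s, z') - F' (s, q)) (0, v)) \<le> e * norm v"
        using norm_blinfun_Pair_zero_le[of "F' (s, z') - F' (s, q)" v] \<open>norm (F' (s, z') - F' (s, q)) < e\<close>
        by (meson less_imp_le mult_right_mono norm_ge_zero order.trans)
      then show "norm (((\<lambda>v. F' (s, z') (0, v)) - (\<lambda>v. F' (s, q) (0, v))) v) \<le> e * norm v"
        by (simp add: blinfun.diff_left)
    qed
  qed (use d in auto)
  then show ?thesis using d by (intro exI[of _ d]) (auto simp: A_def mult.commute)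
qed

lemma traj_gronwall:
  assumes y: "y \<in> X" and tau: "\<tau> \<in> I"
    and stay: "\<forall>s\<in>{t0..\<tau>}. norm (traj y s - traj x s) \<le> r"
  shows "norm (traj y \<tau> - traj x \<tau>) \<le> norm (y - x) * exp (L * (\<tau> - t0))"
proof -
  define e where "e s = norm (traj y s - traj x s)" for s
  have sub: "{t0..\<tau>} \<subseteq> I" using tau by auto
  have ec: "continuous_on {t0..\<tau>} e" unfolding e_def
    using traj_continuous_on[OF y] traj_continuous_on[OF x_in]
    by (intro continuous_intros continuous_on_subset[OF _ sub]) auto
  show ?thesis unfolding e_def[symmetric]
  proof (rule gronwall_exp[OF ec L_pos])
    show "\<tau> \<in> {t0..\<tau>}" using tau by simp
    fix t assume t: "t \<in> {t0..\<tau>}"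
    then have tI: "t \<in> I" using sub by auto
    note iy = f_traj_integrable_on[OF y tI] and ix = f_traj_integrable_on[OF x_in tI]
    have "traj y t - traj x t = (y - x) + integral {t0..t} (\<lambda>s. f s (traj y s) - f s (traj x s))"
      using traj_integral_eq[OF y tI] traj_integral_eq[OF x_in tI] integral_diff[OF iy ix] by simp
    then have "e t \<le> norm (y - x) + norm (integral {t0..t} (\<lambda>s. f s (traj y s) - f s (traj x s)))"
      unfolding e_def by (metis norm_triangle_ineq)
    also have "norm (integral {t0..t} (\<lambda>s. f s (traj y s) - f s (traj x s))) \<le> integral {t0..t} (\<lambda>s. L * e s)"
    proof (rule integral_norm_bound_integral)
      show "(\<lambda>s. f s (traj y s) - f s (traj x s)) integrable_on {t0..t}" using iy ix by (rule integrable_diff)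
      show "(\<lambda>s. L * e s) integrable_on {t0..t}"
        using t by (intro integrable_continuous_real continuous_intros continuous_on_subset[OF ec]) auto
      fix s assume "s \<in> {t0..t}"
      then have "s \<in> I" "dist (traj y s) (traj x s) \<le> r" using stay sub t by (auto simp: dist_norm)
      from f_lipschitz_on_tube[OF this] show "norm (f s (traj y s) - f s (traj x s)) \<le> L * e s"
        by (simp add: e_def)
    qed
    finally show "e t \<le> norm (y - x) + L * integral {t0..t} e" by simp
  qed
qed

lemma traj_stays_close:
  assumes y: "y \<in> X" and small: "norm (y - x) * exp (L * T) < r / 2"
  shows "\<forall>\<tau>\<in>I. norm (traj y \<tau> - traj x \<tau>) \<le> norm (y - x) * exp (L * T)"
proof -
  have bound: "norm (y - x) * exp (L * (\<tau> - t0)) \<le> norm (y - x) * exp (L * T)" if "\<tau> \<in> I" for \<tau>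
    using that L_pos by (intro mult_left_mono) (auto intro: mult_left_mono)
  have "\<forall>\<tau>\<in>I. norm (traj y \<tau> - traj x \<tau>) < r / 2"
  proof (rule continuous_barrier)
    show "continuous_on I (\<lambda>s. norm (traj y s - traj x s))"
      using traj_continuous_on[OF y] traj_continuous_on[OF x_in] by (intro continuous_intros)
    show "norm (traj y t0 - traj x t0) < r / 2"
      using bound[of t0] small sol_init y x_in T_pos by (simp add: traj_def)
    fix \<tau> assume \<tau>: "\<tau> \<in> I" and close: "\<forall>s\<in>{t0..\<tau>}. norm (traj y s - traj x s) \<le> r / 2"
    then have "\<forall>s\<in>{t0..\<tau>}. norm (traj y s - traj x s) \<le> r" using r_pos by force
    from traj_gronwall[OF y \<tau> this] bound[OF \<tau>] small
    show "norm (traj y \<tau> - traj x \<tau>) < r / 2" by linarith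
  qed
  then have "\<forall>s\<in>I. norm (traj y s - traj x s) \<le> r" using r_pos by force
  then have "norm (traj y \<tau> - traj x \<tau>) \<le> norm (y - x) * exp (L * (\<tau> - t0))" if "\<tau> \<in> I" for \<tau>
    using that by (intro traj_gronwall[OF y]) auto
  then show ?thesis using bound by (blast intro: order.trans)
qed

lemma variational_solutions_exist:
  "\<exists>Y. \<forall>i. continuous_on I (Y i) \<and> (\<forall>\<tau>\<in>I. Y i \<tau> = axis i 1 + integral {t0..\<tau>} (\<lambda>s. A s (Y i s)))"
proof -
  have "\<exists>u. continuous_on I u \<and> (\<forall>\<tau>\<in>I. u \<tau> = axis i 1 + integral {t0..\<tau>} (\<lambda>s. A s (u s)))" for i :: 3
    using L_pos by (intro linear_ode_solution_exists[where L = L] linear_A norm_A_le continuous_on_A) auto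
  then show ?thesis by metis
qed

definition Y :: "3 \<Rightarrow> real \<Rightarrow> real^3" where
  "Y = (SOME Y. \<forall>i. continuous_on I (Y i) \<and> (\<forall>\<tau>\<in>I. Y i \<tau> = axis i 1 + integral {t0..\<tau>} (\<lambda>s. A s (Y i s))))"

lemma continuous_on_Y: "continuous_on I (Y i)"
  and Y_integral_eq: "\<tau> \<in> I \<Longrightarrow> Y i \<tau> = axis i 1 + integral {t0..\<tau>} (\<lambda>s. A s (Y i s))"
  using someI_ex[OF variational_solutions_exist] unfolding Y_def[symmetric] by auto

definition M :: "real \<Rightarrow> real^3 \<Rightarrow> real^3" where
  "M \<tau> v = (\<Sum>i\<in>UNIV. v $ i *\<^sub>R Y i \<tau>)"

lemma linear_M: "linear (M \<tau>)"
  unfolding M_def by (intro linearI) (auto simp: scaleR_add_left sum.distrib scaleR_sum_right)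

lemma continuous_on_M: "continuous_on I (\<lambda>s. M s v)"
  unfolding M_def using continuous_on_Y by (intro continuous_intros) auto

lemma M_integral_eq:
  assumes tau: "\<tau> \<in> I"
  shows "M \<tau> v = v + integral {t0..\<tau>} (\<lambda>s. A s (M s v))"
proof -
  have int: "(\<lambda>s. A s (Y i s)) integrable_on {t0..\<tau>}" for i
    using tau by (intro integrable_continuous_real
        continuous_on_subset[OF continuous_on_A[OF continuous_on_Y]]) auto
  have "M \<tau> v = (\<Sum>i\<in>UNIV. v $ i *\<^sub>R axis i 1) + (\<Sum>i\<in>UNIV. v $ i *\<^sub>R integral {t0..\<tau>} (\<lambda>s. A s (Y i s)))"
    unfolding M_def using Y_integral_eq[OF tau] by (simp add: scaleR_add_right sum.distrib)
  also have "(\<Sum>i\<in>UNIV. v $ i *\<^sub>R axis i 1) = v"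
    using basis_expansion[of v] by (simp add: scalar_mult_eq_scaleR)
  also have "(\<Sum>i\<in>UNIV. v $ i *\<^sub>R integral {t0..\<tau>} (\<lambda>s. A s (Y i s)))
      = integral {t0..\<tau>} (\<lambda>s. \<Sum>i\<in>UNIV. v $ i *\<^sub>R A s (Y i s))"
    by (subst integral_sum) (auto intro: integrable_cmul int)
  also have "(\<lambda>s. \<Sum>i\<in>UNIV. v $ i *\<^sub>R A s (Y i s)) = (\<lambda>s. A s (M s v))"
    unfolding M_def linear_sum[OF linear_A] linear_cmul[OF linear_A] ..
  finally show ?thesis .
qed

lemma remainder_integral_eq:
  assumes y: "y \<in> X" and t: "t \<in> I"
  shows "traj y t - traj x t - M t (y - x)
    = integral {t0..t} (\<lambda>s. f s (traj y s) - f s (traj x s) - A s (traj y s - traj x s))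
      + integral {t0..t} (\<lambda>s. A s (traj y s - traj x s - M s (y - x)))"
proof -
  have sub: "{t0..t} \<subseteq> I" using t by auto
  have cont_diff: "continuous_on I (\<lambda>s. traj y s - traj x s)"
    using traj_continuous_on[OF y] traj_continuous_on[OF x_in] by (intro continuous_intros)
  have int: "(\<lambda>s. A s (g s)) integrable_on {t0..t}" if "continuous_on I g" for g
    by (intro integrable_continuous_real continuous_on_subset[OF continuous_on_A[OF that] sub])
  note iy = f_traj_integrable_on[OF y t] and ix = f_traj_integrable_on[OF x_in t]
  note iM = int[OF continuous_on_M] and iD = int[OF cont_diff]
  have nonlinear: "integral {t0..t} (\<lambda>s. f s (traj y s) - f s (traj x s) - A s (traj y s - traj x s))
      = integral {t0..t} (\<lambda>s. f s (traj y s)) - integral {t0..t} (\<lambda>s. f s (traj x s))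
        - integral {t0..t} (\<lambda>s. A s (traj y s - traj x s))"
    using iy ix iD by (simp add: integral_diff integrable_diff)
  have linear: "integral {t0..t} (\<lambda>s. A s (traj y s - traj x s - M s (y - x)))
      = integral {t0..t} (\<lambda>s. A s (traj y s - traj x s)) - integral {t0..t} (\<lambda>s. A s (M s (y - x)))"
    using iD iM by (simp add: linear_diff[OF linear_A] integral_diff)
  show ?thesis
    unfolding nonlinear linear traj_integral_eq[OF y t] traj_integral_eq[OF x_in t] M_integral_eq[OF t]
    by (simp add: algebra_simps)
qed

lemma remainder_bound:
  assumes y: "y \<in> X"
    and h: "\<And>s. s \<in> I \<Longrightarrow> norm (f s (traj y s) - f s (traj x s) - A s (traj y s - traj x s)) \<le> \<eta>"
  shows "norm (traj y (t0 + T) - traj x (t0 + T) - M (t0 + T) (y - x)) \<le> T * \<eta> * exp (L * T)"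
proof -
  define w where "w s = norm (traj y s - traj x s - M s (y - x))" for s
  define h where "h s = f s (traj y s) - f s (traj x s) - A s (traj y s - traj x s)" for s
  have cont_diff: "continuous_on I (\<lambda>s. traj y s - traj x s - M s (y - x))"
    using traj_continuous_on[OF y] traj_continuous_on[OF x_in] continuous_on_M by (intro continuous_intros)
  have cont_h: "continuous_on I h" unfolding h_def
    using f_traj_continuous_on[OF y] f_traj_continuous_on[OF x_in]
      traj_continuous_on[OF y] traj_continuous_on[OF x_in]
    by (intro continuous_intros continuous_on_A)
  have "\<eta> \<ge> 0" using order.trans[OF norm_ge_zero h[of t0]] T_pos by simp
  have cont_w: "continuous_on I w" unfolding w_def by (rule continuous_on_norm[OF cont_diff])
  have "w (t0 + T) \<le> (T * \<eta>) * exp (L * (t0 + T - t0))"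
  proof (rule gronwall_exp[OF cont_w L_pos])
    show "t0 + T \<in> I" using T_pos by simp
    fix t assume t: "t \<in> I"
    have sub: "{t0..t} \<subseteq> I" using t by auto
    have "w t \<le> norm (integral {t0..t} h)
        + norm (integral {t0..t} (\<lambda>s. A s (traj y s - traj x s - M s (y - x))))"
      unfolding w_def remainder_integral_eq[OF y t] h_def by (rule norm_triangle_ineq)
    also have "norm (integral {t0..t} h) \<le> integral {t0..t} (\<lambda>s. \<eta>)"
      using sub h unfolding h_def[symmetric]
      by (intro integral_norm_bound_integral integrable_continuous_real
          continuous_on_subset[OF cont_h sub]) auto
    also have "\<dots> \<le> T * \<eta>" using t \<open>\<eta> \<ge> 0\<close> by (simp add: mult_right_mono)
    also have "norm (integral {t0..t} (\<lambda>s. A s (traj y s - traj x s - M s (y - x))))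
        \<le> integral {t0..t} (\<lambda>s. L * w s)"
    proof (rule integral_norm_bound_integral)
      show "(\<lambda>s. A s (traj y s - traj x s - M s (y - x))) integrable_on {t0..t}"
        by (intro integrable_continuous_real continuous_on_subset[OF continuous_on_A[OF cont_diff] sub])
      show "(\<lambda>s. L * w s) integrable_on {t0..t}"
        by (intro integrable_continuous_real continuous_intros continuous_on_subset[OF cont_w sub])
    qed (use sub norm_A_le in \<open>auto simp: w_def\<close>)
    finally show "w t \<le> T * \<eta> + L * integral {t0..t} w" by simp
  qed
  then show ?thesis unfolding w_def by simp
qed

lemma has_derivative_time_T_map: "((\<lambda>y. traj y (t0 + T)) has_derivative M (t0 + T)) (at x)"
  unfolding has_derivative_at_alt
proof (intro conjI allI impI)
  show "bounded_linear (M (t0 + T))" using linear_M linear_conv_bounded_linear by blast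
  fix e :: real assume e: "e > 0"
  define E where "E = exp (L * T)"
  have E: "E > 0" unfolding E_def by simp
  \<comment> \<open>Gronwall turns a linearization error \<open>\<epsilon> E |y - x|\<close> into a remainder \<open>T \<epsilon> E\<^sup>2 |y - x|\<close>.\<close>
  define \<epsilon> where "\<epsilon> = e / (T * E * E)"
  have "\<epsilon> > 0" unfolding \<epsilon>_def using e T_pos E by simp
  then obtain \<delta> where \<delta>: "\<delta> > 0" and lin: "\<And>s z. s \<in> I \<Longrightarrow> dist z (traj x s) \<le> \<delta> \<Longrightarrow>
      norm (f s z - f s (traj x s) - A s (z - traj x s)) \<le> \<epsilon> * norm (z - traj x s)"
    using f_linearization by blast
  obtain \<rho> where \<rho>: "\<rho> > 0" "ball x \<rho> \<subseteq> X" using X_open x_in open_contains_ball by blast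
  define d where "d = min \<rho> (min (r / (2 * E)) (\<delta> / E))"
  show "\<exists>d>0. \<forall>y. norm (y - x) < d \<longrightarrow>
      norm (traj y (t0 + T) - traj x (t0 + T) - M (t0 + T) (y - x)) \<le> e * norm (y - x)"
  proof (intro exI[of _ d] conjI allI impI)
    show "d > 0" unfolding d_def using \<rho> \<delta> r_pos E by simp
    fix y assume yd: "norm (y - x) < d"
    then have y: "y \<in> X" using \<rho> unfolding d_def by (auto simp: dist_norm norm_minus_commute)
    have small: "norm (y - x) * exp (L * T) < r / 2" and "norm (y - x) * E \<le> \<delta>"
      using yd E unfolding d_def E_def[symmetric] by (simp_all add: field_simps)
    have close: "norm (traj y s - traj x s) \<le> norm (y - x) * E" "dist (traj y s) (traj x s) \<le> \<delta>"
      if "s \<in> I" for s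
      using traj_stays_close[OF y small] that \<open>norm (y - x) * E \<le> \<delta>\<close> unfolding E_def
      by (auto simp: dist_norm intro: order.trans)
    have "norm (f s (traj y s) - f s (traj x s) - A s (traj y s - traj x s)) \<le> \<epsilon> * (norm (y - x) * E)"
      if "s \<in> I" for s
      using lin[OF that close(2)[OF that]] close(1)[OF that] \<open>\<epsilon> > 0\<close>
      by (meson mult_left_mono order.trans less_imp_le)
    from remainder_bound[OF y this]
    show "norm (traj y (t0 + T) - traj x (t0 + T) - M (t0 + T) (y - x)) \<le> e * norm (y - x)"
      unfolding \<epsilon>_def E_def[symmetric] using T_pos E by (simp add: field_simps)
  qed
qed

lemma Y_has_vector_derivative:
  assumes tau: "\<tau> \<in> I"
  shows "(Y k has_vector_derivative A \<tau> (Y k \<tau>)) (at \<tau> within I)"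
proof -
  have "((\<lambda>t. axis k 1 + integral {t0..t} (\<lambda>s. A s (Y k s))) has_vector_derivative A \<tau> (Y k \<tau>))
      (at \<tau> within I)"
    using integral_has_vector_derivative[OF continuous_on_A[OF continuous_on_Y] tau]
    by (intro derivative_eq_intros) auto
  then show ?thesis
    by (rule has_vector_derivative_transform[OF tau, rotated]) (simp add: Y_integral_eq)
qed

lemma matrix_M: "matrix (M t) = (\<chi> j k. Y k t $ j)"
proof -
  have "M t (axis k 1) = Y k t" for k
    unfolding M_def by (subst sum.remove[of _ k]) (auto simp: axis_def)
  then show ?thesis unfolding matrix_def by simp
qed

lemma det_matrix_M:
  assumes trace_zero: "\<And>s. s \<in> I \<Longrightarrow> trace (matrix (A s)) = 0"
  shows "det (matrix (M (t0 + T))) = 1"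
proof -
  define W where "W t = det (\<chi> j k. Y k t $ j)" for t
  have "(W has_real_derivative 0) (at \<tau> within I)" if tau: "\<tau> \<in> I" for \<tau>
  proof -
    define a where "a j l = matrix (A \<tau>) $ j $ l" for j l
    have "A \<tau> (Y k \<tau>) = matrix (A \<tau>) *v Y k \<tau>" for k
      using fun_cong[OF matrix_vector_mul(2)[OF linear_A, of \<tau>], of "Y k \<tau>"] by simp
    then have "A \<tau> (Y k \<tau>) $ j = a j 1 * Y k \<tau> $ 1 + a j 2 * Y k \<tau> $ 2 + a j 3 * Y k \<tau> $ 3" for j k
      by (simp add: matrix_vector_mult_def sum_3 a_def)
    then have "((\<lambda>t. Y k t $ j) has_real_derivative
        a j 1 * Y k \<tau> $ 1 + a j 2 * Y k \<tau> $ 2 + a j 3 * Y k \<tau> $ 3) (at \<tau> within I)" for j k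
      using has_real_derivative_vec_nth[OF Y_has_vector_derivative[OF tau, of k], of j] by simp
    then have "(W has_real_derivative (a 1 1 + a 2 2 + a 3 3) * W \<tau>) (at \<tau> within I)"
      unfolding W_def by (rule det_3_has_real_derivative)
    moreover have "a 1 1 + a 2 2 + a 3 3 = 0" using trace_zero[OF tau] by (simp add: trace_def sum_3 a_def)
    ultimately show ?thesis by simp
  qed
  then obtain c where c: "\<forall>t\<in>I. W t = c" using has_field_derivative_zero_constant[of I W] by auto
  have "(\<chi> j k. Y k t0 $ j) = (mat 1 :: real^3^3)"
    using Y_integral_eq[of t0] T_pos by (simp add: vec_eq_iff mat_def axis_def)
  then have "W t0 = 1" unfolding W_def by simp
  then have "W (t0 + T) = 1" using c T_pos by simp
  then show ?thesis unfolding W_def matrix_M .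
qed

end

context ode_flow
begin

lemma tube_interpretation_exists:
  obtains r L where "ode_flow_tube f D phi X t0 T x F' r L"
proof -
  obtain r where "r > 0" "tube r \<subseteq> D" using tube_subset_exists by blast
  moreover obtain L where "L > 0" "\<forall>p\<in>tube r. norm (F' p) \<le> L"
    using derivative_bound_on_tube[OF \<open>tube r \<subseteq> D\<close>] by blast
  ultimately show thesis by (intro that[of r L], unfold_locales) auto
qed

lemma jacobian_time_T_map:
  "jacobian (\<lambda>y. phi (t0 + T) t0 y) (at x)
    = mat 1 + T *\<^sub>R jacobian (\<lambda>y. (1 / T) *\<^sub>R integral {t0..t0+T} (\<lambda>\<tau>. f \<tau> (phi \<tau> t0 y))) (at x)"
proof -
  obtain r L where "ode_flow_tube f D phi X t0 T x F' r L" by (rule tube_interpretation_exists)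
  then interpret ode_flow_tube f D phi X t0 T x F' r L .
  show ?thesis
  proof (rule jacobian_id_plus_smult[OF _ X_open x_in])
    show "((\<lambda>y. phi (t0 + T) t0 y) has_derivative M (t0 + T)) (at x)"
      using has_derivative_time_T_map unfolding traj_def .
    fix y assume "y \<in> X"
    then show "(1 / T) *\<^sub>R integral {t0..t0+T} (\<lambda>\<tau>. f \<tau> (phi \<tau> t0 y)) = (1 / T) *\<^sub>R (phi (t0 + T) t0 y - y)"
      using traj_integral_eq[of y "t0 + T"] T_pos by (simp add: traj_def)
  qed (use T_pos in simp)
qed

lemma det_jacobian_time_T_map:
  assumes trace_zero: "\<forall>(t, y)\<in>D. trace (jacobian (f t) (at y)) = 0"
  shows "det (jacobian (\<lambda>y. phi (t0 + T) t0 y) (at x)) = 1"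
proof -
  obtain r L where "ode_flow_tube f D phi X t0 T x F' r L" by (rule tube_interpretation_exists)
  then interpret ode_flow_tube f D phi X t0 T x F' r L .
  have "jacobian (\<lambda>y. phi (t0 + T) t0 y) (at x) = matrix (M (t0 + T))"
    using frechet_derivative_at[OF has_derivative_time_T_map] unfolding jacobian_def traj_def by simp
  moreover have "trace (matrix (A s)) = 0" if s: "s \<in> I" for s
  proof -
    have D: "(s, traj x s) \<in> D" using sol_dom x_in s by (simp add: traj_def)
    have "A s = frechet_derivative (f s) (at (traj x s))"
      using frechet_derivative_at[OF f_has_derivative[OF D]] by (simp add: A_def fun_eq_iff)
    then have "matrix (A s) = jacobian (f s) (at (traj x s))" by (simp add: jacobian_def)
    then show ?thesis using trace_zero D by auto
  qed
  ultimately show ?thesis using det_matrix_M by simp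
qed

end

theorem mainTheorem1:
  fixes f :: "real \<Rightarrow> real^3 \<Rightarrow> real^3"
    and D :: "(real \<times> (real^3)) set"
    and phi :: "real \<Rightarrow> real \<Rightarrow> real^3 \<Rightarrow> real^3"
    and X :: "(real^3) set"
    and t0 T :: real and x :: "real^3"
    and mu1 mu2 mu3 :: complex
  assumes D_open: "open D"
    and f_C3: "C3_on (\<lambda>(t, y). f t y) D"
    and incompressible: "\<forall>(t, y)\<in>D. trace (jacobian (f t) (at y)) = 0"
    and T_pos: "T > 0"
    and X_open: "open X"
    and sol_init: "\<forall>y\<in>X. phi t0 t0 y = y"
    and sol_dom: "\<forall>y\<in>X. \<forall>\<tau>\<in>{t0..t0+T}. (\<tau>, phi \<tau> t0 y) \<in> D"
    and sol_ode: "\<forall>y\<in>X. \<forall>\<tau>\<in>{t0..t0+T}.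
          ((\<lambda>s. phi s t0 y) has_vector_derivative f \<tau> (phi \<tau> t0 y)) (at \<tau> within {t0..t0+T})"
    and x_in: "x \<in> X"
    and mu: "charpoly (jacobian psi (at x))
               = [:-mu1, 1:] * [:-mu2, 1:] * [:-mu3, 1:]"
    and psi_def: "psi = (\<lambda>y. phi (t0 + T) t0 y)"
    and ftilde_def: "ftilde = (\<lambda>y. (1 / T) *\<^sub>R integral {t0..t0+T} (\<lambda>\<tau>. f \<tau> (phi \<tau> t0 y)))"
    and N_def: "N = jacobian ftilde (at x)"
    and m_def: "m = minor_sum N"
    and d_def: "d = det N"
    and Sg_def: "Sg = d * T^3 / (8 - 2 * m * T^2 - 3 * d * T^3)"
    and Delta_def: "Delta = - 4 * d^4 * T^12 - 12 * d^3 * m * T^11 - 13 * d^2 * m^2 * T^10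
                 - 6 * d * m^3 * T^9 + (18 * d^2 * m - m^4) * T^8 + 18 * d * m^2 * T^7
                 + (27 * d^2 + 4 * m^3) * T^6"
  shows
    "(8 - 2 * m * T^2 - 3 * d * T^3 = 0 \<longrightarrow>
        cplx_eigenvalue (jacobian psi (at x)) (-1)
        \<and> Im mu1 = 0 \<and> Im mu2 = 0 \<and> Im mu3 = 0
        \<and> \<not> mesohyperbolic psi x)
   \<and> (8 - 2 * m * T^2 - 3 * d * T^3 \<noteq> 0 \<longrightarrow>
        (Sg > 0 \<longrightarrow> length (filter (\<lambda>z. cmod z < 1) [mu1, mu2, mu3]) = 2
                      \<and> length (filter (\<lambda>z. cmod z > 1) [mu1, mu2, mu3]) = 1)
      \<and> (Sg < 0 \<longrightarrow> length (filter (\<lambda>z. cmod z < 1) [mu1, mu2, mu3]) = 1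
                      \<and> length (filter (\<lambda>z. cmod z > 1) [mu1, mu2, mu3]) = 2)
      \<and> (Sg = 0 \<longrightarrow> cplx_eigenvalue (jacobian psi (at x)) 1))
   \<and> (Delta < 0 \<longrightarrow> Im mu1 = 0 \<and> Im mu2 = 0 \<and> Im mu3 = 0
                    \<and> mu1 \<noteq> mu2 \<and> mu1 \<noteq> mu3 \<and> mu2 \<noteq> mu3)
   \<and> (Delta > 0 \<longrightarrow> (\<exists>r a b. {# r, a, b #} = {# mu1, mu2, mu3 #}
                    \<and> Im r = 0 \<and> Im a \<noteq> 0 \<and> b = cnj a))
   \<and> (Delta = 0 \<longrightarrow> Im mu1 = 0 \<and> Im mu2 = 0 \<and> Im mu3 = 0
                    \<and> (mu1 = mu2 \<or> mu1 = mu3 \<or> mu2 = mu3))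
   \<and> (mesohyperbolic psi x \<longleftrightarrow> d \<noteq> 0 \<and> 8 - 2 * m * T^2 - 3 * d * T^3 \<noteq> 0)"
proof -
  obtain F' where "\<forall>p\<in>D. ((\<lambda>(t, y). f t y) has_derivative blinfun_apply (F' p)) (at p)" "continuous_on D F'"
    using C3_on_imp_C1_on[OF f_C3] unfolding C1_on_def by blast
  then interpret ode_flow f D phi X t0 T x F'
    using D_open T_pos X_open sol_init sol_dom sol_ode x_in by unfold_locales auto
  have J: "jacobian psi (at x) = mat 1 + T *\<^sub>R N"
    unfolding psi_def N_def ftilde_def by (rule jacobian_time_T_map)
  have det_J: "det (mat 1 + T *\<^sub>R N) = 1"
    using det_jacobian_time_T_map[OF incompressible] J unfolding psi_def by simp
  interpret roots: unit_product_cubic_roots mu1 mu2 mu3 "3 - m * T^2 - d * T^3" "3 - m * T^2 - 2 * d * T^3"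
    using charpoly_roots[OF mu[unfolded J]] unit_det_id_plus_smult_coefficients[OF det_J] det_J
    unfolding m_def d_def unit_product_cubic_roots_def by simp
  have Sg: "Sg = ((3 - m * T^2 - d * T^3) - (3 - m * T^2 - 2 * d * T^3))
      / ((3 - m * T^2 - d * T^3) + (3 - m * T^2 - 2 * d * T^3) + 2)"
    unfolding Sg_def by (simp add: algebra_simps)
  have disc: "cubic_discriminant (3 - m * T^2 - d * T^3) (3 - m * T^2 - 2 * d * T^3) 1 = - Delta"
    unfolding cubic_discriminant_mesochronic Delta_def by simp
  have one: "1 \<in> set [mu1, mu2, mu3] \<longleftrightarrow> d = 0"
    using roots.one_root_iff T_pos by simp
  have minus_one: "-1 \<in> set [mu1, mu2, mu3] \<longleftrightarrow> 8 - 2 * m * T^2 - 3 * d * T^3 = 0"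
    using roots.minus_one_root_iff by (simp add: algebra_simps)
  have "mesohyperbolic psi x \<longleftrightarrow> d \<noteq> 0 \<and> 8 - 2 * m * T^2 - 3 * d * T^3 \<noteq> 0"
    using roots.unit_modulus_root_iff
    unfolding mesohyperbolic_def cplx_eigenvalue_iff_root[OF mu] one minus_one by blast
  then show ?thesis
    unfolding cplx_eigenvalue_iff_root[OF mu] one minus_one
    using roots.minus_one_root_imp_real[unfolded minus_one]
      roots.two_inside_one_outside[folded Sg] roots.one_inside_two_outside[folded Sg]
      roots.discriminant_pos_imp_distinct_real[unfolded disc]
      roots.discriminant_neg_imp_conjugate_pair[unfolded disc]
      roots.discriminant_zero_imp_repeated_real[unfolded disc]
      T_pos by (auto simp: Sg_def)
qed

end
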